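(* Let $n_1(t,x)$ and $n_2(t,x)$, $t\ge 0$, $x>0$, be nonnegative solutions to Smoluchowski's coagulation equation $$\partial_t n(t,x)=\frac12\int_0^x K(x-y,y)n(t,x-y)n(t,y)\,dy-\int_0^\infty K(x,y)n(t,x)n(t,y)\,dy$$ with additive kernel $K(x,y)=x+y$, such that for $\ell=1,2$, $n_\ell(0,\cdot)\in L^1(\mathbb{R}^+)$ and $$\int_0^\infty x\,n_\ell(0,x)\,dx=\int_0^\infty x^2 n_\ell(0,x)\,dx=1,\qquad \int_0^\infty x^3 n_\ell(0,x)\,dx<\infty.$$ For $\ell=1,2$ let $g_\ell(\tau,z)=e^{2\tau}n_\ell(\tfrac12\tau,e^\tau z)$ for $\tau\ge0$, $z>0$. Then for each $\kappa\in(2,3)$, $$\|g_1(\tau,\cdot)-g_2(\tau,\cdot)\|_{\mathsf{add},\kappa}\le e^{-\frac12(\kappa-2)\tau}\|g_1(0,\cdot)-g_2(0,\cdot)\|_{\mathsf{add},\kappa}\qquad\forall\tau\ge0.$$ In particular, this shows exponential convergence, with respect to $\|\cdot\|_{\mathsf{add},\kappa}$, of such rescaled solutions towards the unique self-similar profile $G_{\mathsf{add}}(x)=\frac{1}{\sqrt{2\pi}}x^{-3/2}e^{-x/2}$.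
   Context: For a function $g$ on $(0,\infty)$ and $\kappa\in\mathbb{R}$, $\|g\|_{\mathsf{add},\kappa}=\sup_{\eta>0}\eta^{-\kappa}\left|\int_0^\infty (1-e^{-\eta x})g(x)\,dx\right|$. $\mathbb{R}^+=(0,\infty)$. Solutions are mass-conserving: $\int_0^\infty x n_\ell(t,x)\,dx$ is constant in $t$. *)

theory Defs
  imports "HOL-Analysis.Analysis"
begin

definition coag_test_fun :: "(real \<Rightarrow> real) \<Rightarrow> bool" where
  "coag_test_fun \<phi> \<longleftrightarrow> continuous_on UNIV \<phi> \<and>
     (\<exists>a b. 0 < a \<and> (\<forall>x. x \<notin> {a..b} \<longrightarrow> \<phi> x = 0))"

definition coag_op :: "(real \<Rightarrow> real \<Rightarrow> real) \<Rightarrow> (real \<Rightarrow> real \<Rightarrow> real) \<Rightarrow> real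
    \<Rightarrow> (real \<Rightarrow> real) \<Rightarrow> real" where
  "coag_op K n s \<phi> = (1/2) * (LINT x:{0<..}|lborel. LINT y:{0<..}|lborel.
       K x y * (\<phi> (x + y) - \<phi> x - \<phi> y) * n s x * n s y)"

definition smol_solution :: "(real \<Rightarrow> real \<Rightarrow> real) \<Rightarrow> (real \<Rightarrow> real \<Rightarrow> real) \<Rightarrow> bool" where
  "smol_solution K n \<longleftrightarrow>
     (\<forall>t\<ge>0. \<forall>x>0. 0 \<le> n t x) \<and>
     (\<forall>t\<ge>0. set_integrable lborel {0<..} (n t) \<and>
              set_integrable lborel {0<..} (\<lambda>x. x * n t x)) \<and>
     (\<forall>s\<ge>0. set_integrable (lborel \<Otimes>\<^sub>M lborel) ({0<..} \<times> {0<..})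
              (\<lambda>p. K (fst p) (snd p) * n s (fst p) * n s (snd p))) \<and>
     (\<forall>t\<ge>0. \<forall>\<phi>. coag_test_fun \<phi> \<longrightarrow>
        set_integrable lborel {0..t} (\<lambda>s. coag_op K n s \<phi>) \<and>
        (LINT x:{0<..}|lborel. \<phi> x * n t x) =
          (LINT x:{0<..}|lborel. \<phi> x * n 0 x) + (LINT s:{0..t}|lborel. coag_op K n s \<phi>))"

definition mass_conserving :: "(real \<Rightarrow> real \<Rightarrow> real) \<Rightarrow> bool" where
  "mass_conserving n \<longleftrightarrow>
     (\<forall>t\<ge>0. (LINT x:{0<..}|lborel. x * n t x) = (LINT x:{0<..}|lborel. x * n 0 x))"

definition add_norm :: "real \<Rightarrow> (real \<Rightarrow> real) \<Rightarrow> ereal" where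
  "add_norm \<kappa> g = (SUP \<eta>\<in>{0<..}. ereal (\<eta> powr (-\<kappa>) *
        \<bar>LINT x:{0<..}|lborel. (1 - exp (-(\<eta> * x))) * g x\<bar>))"

definition rescale :: "(real \<Rightarrow> real \<Rightarrow> real) \<Rightarrow> real \<Rightarrow> real \<Rightarrow> real" where
  "rescale n \<tau> z = exp (2 * \<tau>) * n (\<tau> / 2) (exp \<tau> * z)"

end

theory Submission
  imports Defs
begin

text \<open>For a mass-conserving solution with unit mass put F(t, \<eta>) = \<integral> (1 - e^(-\<eta> x)) n(t, x) dx and
  P(t, \<eta>) = \<integral> x e^(-\<eta> x) n(t, x) dx, the \<eta>-derivative of F. Testing the equation with
  1 - e^(-\<eta> x) gives the Burgers-type equation dF/dt = -(1 - P) F, along whose characteristics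
  \<eta>(t) = \<xi> - (1 - e^(-t)) F(0, \<xi>) one has F(t, \<eta>(t)) = e^(-t) F(0, \<xi>). Tracing two solutions back
  to the feet of their characteristics, monotonicity and the 1-Lipschitz property of F(0, \<cdot>) give
  |F1(t, \<eta>) - F2(t, \<eta>)| \<le> |F1(0, b) - F2(0, b)| for some b \<in> [\<eta>, \<eta> e^t]. The rescaled norm is the
  supremum of \<eta>^(-\<kappa>) e^\<tau> |F1 - F2|(\<tau>/2, \<eta> e^(-\<tau>)), and b \<le> \<eta> e^(-\<tau>/2) yields the factor
  e^(-(\<kappa>-2)\<tau>/2).\<close>

lemma exp_neg_diff_le:
  fixes a b :: real
  shows "\<bar>exp (-a) - exp (-b)\<bar> \<le> \<bar>a - b\<bar> * exp (- min a b)"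
proof -
  have *: "\<bar>exp (-a) - exp (-b)\<bar> \<le> (b - a) * exp (-a)" if "a \<le> b" for a b :: real
  proof -
    have "1 - (b - a) \<le> exp (-(b - a))"
      using exp_ge_add_one_self[of "a - b"] by (simp add: algebra_simps)
    then have "exp (-a) * (1 - (b - a)) \<le> exp (-a) * exp (-(b - a))"
      by simp
    moreover have "exp (-b) \<le> exp (-a)"
      using that by simp
    ultimately show ?thesis
      by (simp add: algebra_simps flip: exp_add)
  qed
  show ?thesis
    using *[of a b] *[of b a] by (cases "a \<le> b") (auto simp: min_def abs_minus_commute)
qed

lemma exp_neg_lipschitz: "0 \<le> (a::real) \<Longrightarrow> 0 \<le> b \<Longrightarrow> \<bar>exp (-a) - exp (-b)\<bar> \<le> \<bar>a - b\<bar>"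
  using exp_neg_diff_le[of a b] mult_left_le[of "exp (- min a b)" "\<bar>a - b\<bar>"] by simp

lemma mult_exp_neg_le:
  fixes x m :: real
  assumes "0 < m"
  shows "x * exp (-(m * x)) \<le> 1 / m"
proof -
  have "m * x * exp (-(m * x)) \<le> exp (m * x) * exp (-(m * x))"
    using exp_ge_add_one_self[of "m * x"] by (intro mult_right_mono) (auto simp del: exp_ge_add_one_self)
  then show ?thesis
    using assms by (simp add: field_simps flip: exp_add)
qed

lemma abs_exp_sub_one_sub_le: "\<bar>exp x - 1 - x\<bar> \<le> x\<^sup>2 * exp (max 0 x)" for x :: real
proof (cases "0 \<le> x")
  case True
  have "exp x * (1 - x) \<le> exp x * exp (-x)"
    using exp_ge_add_one_self[of "-x"] by simp
  then have "exp x - 1 \<le> x * exp x"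
    by (simp add: algebra_simps flip: exp_add)
  then have "exp x - 1 - x \<le> x * (exp x - 1)"
    by (simp add: algebra_simps)
  also have "\<dots> \<le> x * (x * exp x)"
    using \<open>exp x - 1 \<le> x * exp x\<close> True by (rule mult_left_mono)
  finally have "exp x - 1 - x \<le> x * (x * exp x)" .
  moreover have "0 \<le> exp x - 1 - x"
    using exp_ge_add_one_self[of x] by linarith
  ultimately show ?thesis
    using True by (simp add: power2_eq_square)
next
  case False
  define d where "d = -x"
  have d: "0 < d" using False by (simp add: d_def)
  have "(1 + d) * exp (-d) \<le> exp d * exp (-d)"
    using exp_ge_add_one_self[of d] by (simp add: add.commute)
  also have "\<dots> = 1" by (simp flip: exp_add)
  also have "1 \<le> (1 + d) * (1 - d + d\<^sup>2)"
    using d by (simp add: power2_eq_square algebra_simps)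
  finally have "exp (-d) \<le> 1 - d + d\<^sup>2"
    using d by (simp add: mult_le_cancel_left_pos)
  moreover have "0 \<le> exp x - 1 - x"
    using exp_ge_add_one_self[of x] by linarith
  ultimately show ?thesis
    using False by (simp add: d_def)
qed

lemma exp_neg_taylor_le:
  fixes a b :: real
  shows "\<bar>exp (-b) - exp (-a) + (b - a) * exp (-a)\<bar> \<le> (b - a)\<^sup>2 * exp (- min a b)"
proof -
  have "exp (-b) - exp (-a) + (b - a) * exp (-a) = exp (-a) * (exp (a - b) - 1 - (a - b))"
    by (simp add: algebra_simps flip: exp_add)
  then have "\<bar>exp (-b) - exp (-a) + (b - a) * exp (-a)\<bar> = exp (-a) * \<bar>exp (a - b) - 1 - (a - b)\<bar>"
    by (simp add: abs_mult)
  also have "\<dots> \<le> exp (-a) * ((a - b)\<^sup>2 * exp (max 0 (a - b)))"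
    by (rule mult_left_mono[OF abs_exp_sub_one_sub_le]) simp
  also have "exp (-a) * exp (max 0 (a - b)) = exp (- min a b)"
    by (simp add: max_def min_def flip: exp_add)
  then have "exp (-a) * ((a - b)\<^sup>2 * exp (max 0 (a - b))) = (b - a)\<^sup>2 * exp (- min a b)"
    by (metis mult.left_commute power2_commute)
  finally show ?thesis .
qed

lemma has_real_derivative_quadratic_remainder:
  fixes f :: "real \<Rightarrow> real"
  assumes "0 < \<delta>"
    and remainder: "\<And>s. \<bar>s - t\<bar> < \<delta> \<Longrightarrow> \<bar>f s - f t - (s - t) * D\<bar> \<le> K * (s - t)\<^sup>2"
  shows "(f has_real_derivative D) (at t)"
proof -
  have "((\<lambda>s. (f s - f t) / (s - t) - D) \<longlongrightarrow> 0) (at t)"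
  proof (rule Lim_null_comparison)
    show "\<forall>\<^sub>F s in at t. norm ((f s - f t) / (s - t) - D) \<le> \<bar>K\<bar> * \<bar>s - t\<bar>"
      unfolding eventually_at
    proof (intro exI[of _ \<delta>] conjI ballI impI)
      fix s assume s: "s \<noteq> t \<and> dist s t < \<delta>"
      then have "norm ((f s - f t) / (s - t) - D) = \<bar>f s - f t - (s - t) * D\<bar> / \<bar>s - t\<bar>"
        by (simp add: field_simps)
      also have "\<dots> \<le> K * (s - t)\<^sup>2 / \<bar>s - t\<bar>"
        using s remainder[of s] by (simp add: dist_real_def divide_right_mono)
      also have "\<dots> = K * \<bar>s - t\<bar>"
        using s by (cases "s < t") (auto simp: power2_eq_square field_simps)
      also have "\<dots> \<le> \<bar>K\<bar> * \<bar>s - t\<bar>"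
        by (simp add: mult_right_mono)
      finally show "norm ((f s - f t) / (s - t) - D) \<le> \<bar>K\<bar> * \<bar>s - t\<bar>" .
    qed (rule \<open>0 < \<delta>\<close>)
    show "((\<lambda>s. \<bar>K\<bar> * \<bar>s - t\<bar>) \<longlongrightarrow> 0) (at t)"
      by (intro tendsto_eq_intros) (auto intro: tendsto_ident_at)
  qed
  then show ?thesis
    by (simp add: has_field_derivative_iff LIM_zero_iff)
qed

lemma abs_integral_le_integral:
  fixes f g :: "'a \<Rightarrow> real"
  assumes "integrable M g" and "\<And>x. \<bar>f x\<bar> \<le> g x"
  shows "\<bar>integral\<^sup>L M f\<bar> \<le> integral\<^sup>L M g"
proof -
  have "\<bar>integral\<^sup>L M f\<bar> \<le> integral\<^sup>L M (\<lambda>x. \<bar>f x\<bar>)"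
    using integral_norm_bound[of M f] by simp
  also have "\<dots> \<le> integral\<^sup>L M g"
    using assms order_trans[OF abs_ge_zero assms(2)] by (intro integral_mono') auto
  finally show ?thesis .
qed

lemma set_integral_increment_le:
  fixes f :: "real \<Rightarrow> real"
  assumes "0 \<le> r" "r \<le> t" and f: "set_integrable lborel {0..t} f"
    and close: "\<And>s. r \<le> s \<Longrightarrow> s \<le> t \<Longrightarrow> \<bar>f s - c\<bar> \<le> e"
  shows "\<bar>(LINT s:{0..t}|lborel. f s) - (LINT s:{0..r}|lborel. f s) - (t - r) * c\<bar> \<le> e * (t - r)"
proof -
  have f_r: "set_integrable lborel {0..r} f" and f_rt: "set_integrable lborel {r<..t} f"
    using assms by (auto intro: set_integrable_subset[OF f])
  have "{0..t} = {0..r} \<union> {r<..t}"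
    using assms by auto
  moreover have "{0..r} \<inter> {r<..t} = {}"
    by auto
  ultimately have split: "(LINT s:{0..t}|lborel. f s) = (LINT s:{0..r}|lborel. f s) + (LINT s:{r<..t}|lborel. f s)"
    using set_integral_Un[OF _ f_r f_rt] by simp
  have const: "(LINT s:{r<..t}|lborel. a) = (t - r) * a" for a :: real
    using assms by (simp add: set_integral_const measure_def)
  have const_int: "set_integrable lborel {r<..t} (\<lambda>s. a)" for a :: real
    unfolding set_integrable_def using assms by (intro integrable_scaleR_left integrable_real_indicator) auto
  have near: "c - e \<le> f s \<and> f s \<le> c + e" if "s \<in> {r<..t}" for s
    using close[of s] that by (auto simp: abs_le_iff)
  have "(LINT s:{r<..t}|lborel. f s) \<le> (t - r) * (c + e)"
    unfolding const[symmetric] using near by (intro set_integral_mono[OF f_rt const_int]) auto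
  moreover have "(t - r) * (c - e) \<le> (LINT s:{r<..t}|lborel. f s)"
    unfolding const[symmetric] using near by (intro set_integral_mono[OF const_int f_rt]) auto
  ultimately show ?thesis
    using split by (simp add: abs_le_iff algebra_simps)
qed

lemma set_integral_increment:
  fixes f :: "real \<Rightarrow> real"
  assumes "0 \<le> r" "0 \<le> t"
    and f: "set_integrable lborel {0..t} f" "set_integrable lborel {0..r} f"
    and close: "\<And>s. min r t \<le> s \<Longrightarrow> s \<le> max r t \<Longrightarrow> \<bar>f s - c\<bar> \<le> e"
  shows "\<bar>(LINT s:{0..t}|lborel. f s) - (LINT s:{0..r}|lborel. f s) - (t - r) * c\<bar> \<le> e * \<bar>t - r\<bar>"
proof (cases "r \<le> t")
  case True
  have "\<bar>(LINT s:{0..t}|lborel. f s) - (LINT s:{0..r}|lborel. f s) - (t - r) * c\<bar> \<le> e * (t - r)"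
    by (rule set_integral_increment_le[OF \<open>0 \<le> r\<close> True f(1)]) (use close True in simp)
  then show ?thesis
    using True by simp
next
  case False
  have "\<bar>(LINT s:{0..r}|lborel. f s) - (LINT s:{0..t}|lborel. f s) - (r - t) * c\<bar> \<le> e * (r - t)"
    by (rule set_integral_increment_le[OF \<open>0 \<le> t\<close> _ f(2)]) (use close False in simp_all)
  moreover have "(LINT s:{0..t}|lborel. f s) - (LINT s:{0..r}|lborel. f s) - (t - r) * c
      = - ((LINT s:{0..r}|lborel. f s) - (LINT s:{0..t}|lborel. f s) - (r - t) * c)"
    by (simp add: algebra_simps)
  moreover have "\<bar>t - r\<bar> = r - t"
    using False by simp
  ultimately show ?thesis
    by (simp only: abs_minus_cancel)
qed

lemma set_integral_Icc_bounded_convergence: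
  fixes f :: "nat \<Rightarrow> real \<Rightarrow> real"
  assumes f: "\<And>k. set_integrable lborel {a..b} (f k)"
    and lim: "\<And>s. s \<in> {a..b} \<Longrightarrow> (\<lambda>k. f k s) \<longlonglongrightarrow> g s"
    and bound: "\<And>k s. s \<in> {a..b} \<Longrightarrow> \<bar>f k s\<bar> \<le> M"
  shows "set_integrable lborel {a..b} g"
    and "(\<lambda>k. LINT s:{a..b}|lborel. f k s) \<longlonglongrightarrow> (LINT s:{a..b}|lborel. g s)"
proof -
  let ?f = "\<lambda>k s. indicator {a..b} s *\<^sub>R f k s" and ?g = "\<lambda>s. indicator {a..b} s *\<^sub>R g s"
  have lim': "(\<lambda>k. ?f k s) \<longlonglongrightarrow> ?g s" for s
    using lim[of s] by (cases "s \<in> {a..b}") auto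
  have meas: "?f k \<in> borel_measurable lborel" for k
    using f unfolding set_integrable_def by (rule borel_measurable_integrable)
  have meas_g: "?g \<in> borel_measurable lborel"
    using lim' meas by (rule borel_measurable_LIMSEQ_real)
  have M_int: "integrable lborel (\<lambda>s. indicator {a..b} s * M)"
    by (intro integrable_mult_left integrable_real_indicator) (auto simp: emeasure_lborel_Icc_eq)
  have bound': "norm (?f k s) \<le> indicator {a..b} s * M" for k s
    using bound[of s k] by (auto simp: indicator_def)
  have "norm (?g s) \<le> indicator {a..b} s * M" for s
  proof (rule LIMSEQ_le_const2)
    show "(\<lambda>k. norm (?f k s)) \<longlonglongrightarrow> norm (?g s)"
      using lim' by (rule tendsto_norm)
  qed (use bound' in auto)
  then have "norm (?g s) \<le> norm (indicator {a..b} s * M)" for s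
    by (metis abs_ge_self order_trans real_norm_def)
  then show "set_integrable lborel {a..b} g"
    unfolding set_integrable_def by (intro Bochner_Integration.integrable_bound[OF M_int meas_g] AE_I2)
  show "(\<lambda>k. LINT s:{a..b}|lborel. f k s) \<longlonglongrightarrow> (LINT s:{a..b}|lborel. g s)"
    unfolding set_lebesgue_integral_def
    using lim' bound' by (intro integral_dominated_convergence[OF meas_g meas M_int]) auto
qed

lemma abs_max_min_diff_le:
  fixes a b c d :: real
  shows "\<bar>max 0 (min a b) - max 0 (min c d)\<bar> \<le> max \<bar>a - c\<bar> \<bar>b - d\<bar>"
  by (auto simp: max_def min_def abs_if)

lemma one_minus_exp_neg_bounds: "0 \<le> u \<Longrightarrow> 0 \<le> 1 - exp (-u) \<and> 1 - exp (-u) \<le> u" for u :: real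
  using exp_ge_add_one_self[of "-u"] by simp

lemma exp_neg_min_le:
  fixes x m \<eta> \<eta>' :: real
  assumes "0 \<le> x" "m \<le> \<eta>" "m \<le> \<eta>'"
  shows "exp (- min (\<eta> * x) (\<eta>' * x)) \<le> exp (-(m * x))"
  using assms mult_right_mono[of m \<eta> x] mult_right_mono[of m \<eta>' x] by simp

lemma laplace_kernel_lipschitz:
  fixes x m \<eta> \<eta>' :: real
  assumes "0 < m" "m \<le> \<eta>" "m \<le> \<eta>'" "0 \<le> x"
  shows "\<bar>x * exp (-(\<eta> * x)) - x * exp (-(\<eta>' * x))\<bar> \<le> \<bar>\<eta> - \<eta>'\<bar> / m * x"
proof -
  have "\<bar>exp (-(\<eta> * x)) - exp (-(\<eta>' * x))\<bar> \<le> \<bar>\<eta> * x - \<eta>' * x\<bar> * exp (- min (\<eta> * x) (\<eta>' * x))"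
    by (rule exp_neg_diff_le)
  also have "\<bar>\<eta> * x - \<eta>' * x\<bar> = \<bar>\<eta> - \<eta>'\<bar> * x"
    using \<open>0 \<le> x\<close> by (simp add: abs_mult left_diff_distrib[symmetric])
  also have "\<bar>\<eta> - \<eta>'\<bar> * x * exp (- min (\<eta> * x) (\<eta>' * x)) \<le> \<bar>\<eta> - \<eta>'\<bar> * x * exp (-(m * x))"
    using exp_neg_min_le[of x m \<eta> \<eta>'] assms by (intro mult_left_mono) auto
  finally have "x * \<bar>exp (-(\<eta> * x)) - exp (-(\<eta>' * x))\<bar> \<le> \<bar>\<eta> - \<eta>'\<bar> * x * (x * exp (-(m * x)))"
    using \<open>0 \<le> x\<close> mult_left_mono by (fastforce simp: ac_simps)
  also have "\<dots> \<le> \<bar>\<eta> - \<eta>'\<bar> * x * (1 / m)"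
    using assms mult_exp_neg_le[of m x] by (intro mult_left_mono) auto
  finally show ?thesis
    using \<open>0 \<le> x\<close> by (simp add: abs_mult right_diff_distrib[symmetric])
qed

lemma bernstein_kernel_taylor:
  fixes x m \<eta> \<eta>' :: real
  assumes "0 < m" "m \<le> \<eta>" "m \<le> \<eta>'" "0 \<le> x"
  shows "\<bar>(1 - exp (-(\<eta>' * x))) - (1 - exp (-(\<eta> * x))) - (\<eta>' - \<eta>) * (x * exp (-(\<eta> * x)))\<bar>
    \<le> (\<eta>' - \<eta>)\<^sup>2 / m * x"
proof -
  have "\<bar>exp (-(\<eta>' * x)) - exp (-(\<eta> * x)) + (\<eta>' * x - \<eta> * x) * exp (-(\<eta> * x))\<bar>
      \<le> (\<eta>' * x - \<eta> * x)\<^sup>2 * exp (- min (\<eta> * x) (\<eta>' * x))"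
    by (rule exp_neg_taylor_le)
  also have "(\<eta>' * x - \<eta> * x)\<^sup>2 = (\<eta>' - \<eta>)\<^sup>2 * x * x"
    by (simp add: power2_eq_square algebra_simps)
  also have "(\<eta>' - \<eta>)\<^sup>2 * x * x * exp (- min (\<eta> * x) (\<eta>' * x)) \<le> (\<eta>' - \<eta>)\<^sup>2 * x * x * exp (-(m * x))"
    using exp_neg_min_le[of x m \<eta> \<eta>'] assms by (intro mult_left_mono) auto
  also have "\<dots> = (\<eta>' - \<eta>)\<^sup>2 * x * (x * exp (-(m * x)))"
    by simp
  also have "\<dots> \<le> (\<eta>' - \<eta>)\<^sup>2 * x * (1 / m)"
    using assms mult_exp_neg_le[of m x] by (intro mult_left_mono) auto
  finally show ?thesis
    by (simp add: algebra_simps)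
qed

lemma lipschitz_on_one_minus_exp_neg:
  fixes \<eta> :: real
  assumes "0 \<le> \<eta>"
  shows "\<eta>-lipschitz_on {0..} (\<lambda>x. 1 - exp (-(\<eta> * x)))"
proof (rule lipschitz_onI)
  fix x z :: real assume "x \<in> {0..}" "z \<in> {0..}"
  then have "\<bar>exp (-(\<eta> * z)) - exp (-(\<eta> * x))\<bar> \<le> \<bar>\<eta> * z - \<eta> * x\<bar>"
    using assms by (intro exp_neg_lipschitz) auto
  also have "\<dots> = \<eta> * \<bar>x - z\<bar>"
    using assms by (simp add: abs_mult right_diff_distrib[symmetric] abs_minus_commute)
  finally show "dist (1 - exp (-(\<eta> * x))) (1 - exp (-(\<eta> * z))) \<le> \<eta> * dist x z"
    by (simp add: dist_real_def)
qed (fact assms)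

lemma lipschitz_on_mult_exp_neg:
  fixes \<eta> :: real
  assumes "0 \<le> \<eta>"
  shows "1-lipschitz_on {0..} (\<lambda>x. x * exp (-(\<eta> * x)))"
proof (rule lipschitz_onI)
  have deriv: "((\<lambda>x. x * exp (-(\<eta> * x))) has_field_derivative (1 - \<eta> * y) * exp (-(\<eta> * y))) (at y within {0..})"
    for y
    by (auto intro!: derivative_eq_intros simp: algebra_simps)
  have bound: "norm ((1 - \<eta> * y) * exp (-(\<eta> * y))) \<le> 1" if "y \<in> {0..}" for y
  proof -
    have "1 + \<eta> * y \<le> exp (\<eta> * y)"
      by (rule exp_ge_add_one_self)
    moreover have "0 \<le> \<eta> * y"
      using that assms by simp
    ultimately have "\<bar>1 - \<eta> * y\<bar> \<le> exp (\<eta> * y)"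
      unfolding abs_le_iff by linarith
    then have "\<bar>1 - \<eta> * y\<bar> * exp (-(\<eta> * y)) \<le> exp (\<eta> * y) * exp (-(\<eta> * y))"
      by (intro mult_right_mono) auto
    then show ?thesis
      by (simp add: abs_mult flip: exp_add)
  qed
  fix x z :: real assume "x \<in> {0..}" "z \<in> {0..}"
  then have "norm (x * exp (-(\<eta> * x)) - z * exp (-(\<eta> * z))) \<le> 1 * norm (x - z)"
    by (intro field_differentiable_bound[OF convex_real_interval(1) deriv bound])
  then show "dist (x * exp (-(\<eta> * x))) (z * exp (-(\<eta> * z))) \<le> 1 * dist x z"
    by (simp add: dist_real_def)
qed simp

section \<open>Lipschitz test functions\<close>

text \<open>The truncation vanishes near 0 because \<phi> 0 = 0, and beyond B / \<epsilon> because of the linear cap,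
  so it is an admissible test function.\<close>
definition test_cutoff :: "(real \<Rightarrow> real) \<Rightarrow> real \<Rightarrow> real \<Rightarrow> real \<Rightarrow> real" where
  "test_cutoff \<phi> B \<epsilon> x = max 0 (min (\<phi> (max 0 x) - \<epsilon>) (B - \<epsilon> * x))"

lemma test_cutoff_0: "\<phi> 0 = 0 \<Longrightarrow> 0 < \<epsilon> \<Longrightarrow> test_cutoff \<phi> B \<epsilon> 0 = 0"
  by (simp add: test_cutoff_def)

lemma lipschitz_on_test_cutoff:
  assumes lip: "L-lipschitz_on {0..} \<phi>" and "0 < \<epsilon>" "\<epsilon> \<le> 1"
  shows "(L + 1)-lipschitz_on {0..} (test_cutoff \<phi> B \<epsilon>)"
proof (rule lipschitz_onI)
  have L: "0 \<le> L"
    using lip by (rule lipschitz_on_nonneg)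
  fix x z :: real assume xz: "x \<in> {0..}" "z \<in> {0..}"
  then have "\<bar>test_cutoff \<phi> B \<epsilon> x - test_cutoff \<phi> B \<epsilon> z\<bar>
      = \<bar>max 0 (min (\<phi> x - \<epsilon>) (B - \<epsilon> * x)) - max 0 (min (\<phi> z - \<epsilon>) (B - \<epsilon> * z))\<bar>"
    by (simp add: test_cutoff_def)
  also have "\<dots> \<le> max \<bar>(\<phi> x - \<epsilon>) - (\<phi> z - \<epsilon>)\<bar> \<bar>(B - \<epsilon> * x) - (B - \<epsilon> * z)\<bar>"
    by (rule abs_max_min_diff_le)
  also have "\<dots> \<le> max (L * \<bar>x - z\<bar>) (\<epsilon> * \<bar>x - z\<bar>)"
  proof (rule max.mono)
    show "\<bar>(\<phi> x - \<epsilon>) - (\<phi> z - \<epsilon>)\<bar> \<le> L * \<bar>x - z\<bar>"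
      using lipschitz_onD[OF lip xz] by (simp add: dist_real_def)
    have "(B - \<epsilon> * x) - (B - \<epsilon> * z) = \<epsilon> * (z - x)"
      by (simp add: algebra_simps)
    then show "\<bar>(B - \<epsilon> * x) - (B - \<epsilon> * z)\<bar> \<le> \<epsilon> * \<bar>x - z\<bar>"
      using \<open>0 < \<epsilon>\<close> by (simp add: abs_mult abs_minus_commute)
  qed
  also have "\<dots> \<le> (L + 1) * \<bar>x - z\<bar>"
    by (intro max.boundedI mult_right_mono) (use L assms in auto)
  finally show "dist (test_cutoff \<phi> B \<epsilon> x) (test_cutoff \<phi> B \<epsilon> z) \<le> (L + 1) * dist x z"
    by (simp add: dist_real_def)
qed (use lipschitz_on_nonneg[OF lip] in simp)

lemma coag_test_fun_test_cutoff:
  assumes lip: "L-lipschitz_on {0..} \<phi>" and "\<phi> 0 = 0" "0 < \<epsilon>"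
  shows "coag_test_fun (test_cutoff \<phi> B \<epsilon>)"
  unfolding coag_test_fun_def
proof (intro conjI exI allI impI)
  have L: "0 \<le> L"
    using lip by (rule lipschitz_on_nonneg)
  have "continuous_on {0..} \<phi>"
    using lip by (rule lipschitz_on_continuous_on)
  then have "continuous_on UNIV (\<lambda>x. \<phi> (max 0 x))"
    by (rule continuous_on_compose2) (auto intro: continuous_intros)
  then show "continuous_on UNIV (test_cutoff \<phi> B \<epsilon>)"
    unfolding test_cutoff_def[abs_def] by (intro continuous_intros)
  show "0 < \<epsilon> / (L + 1)"
    using L \<open>0 < \<epsilon>\<close> by simp
  fix x assume x: "x \<notin> {\<epsilon> / (L + 1)..B / \<epsilon>}"
  show "test_cutoff \<phi> B \<epsilon> x = 0"
  proof (cases "x < \<epsilon> / (L + 1)")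
    case True
    have "\<phi> (max 0 x) \<le> L * max 0 x"
      using lipschitz_onD[OF lip, of "max 0 x" 0] \<open>\<phi> 0 = 0\<close> by (simp add: dist_real_def)
    also have "\<dots> \<le> L * (\<epsilon> / (L + 1))"
      using True L \<open>0 < \<epsilon>\<close> by (intro mult_left_mono) auto
    also have "\<dots> < \<epsilon>"
      using L \<open>0 < \<epsilon>\<close> by (simp add: field_simps)
    finally show ?thesis
      by (simp add: test_cutoff_def)
  next
    case False
    then have "B / \<epsilon> < x"
      using x by auto
    then have "B < \<epsilon> * x"
      using \<open>0 < \<epsilon>\<close> by (simp add: divide_less_eq mult.commute)
    then show ?thesis
      by (simp add: test_cutoff_def)
  qed
qed

lemma tendsto_test_cutoff:
  assumes "\<epsilon> \<longlonglongrightarrow> 0" "0 \<le> x" "0 \<le> \<phi> x" "\<phi> x \<le> B"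
  shows "(\<lambda>k. test_cutoff \<phi> B (\<epsilon> k) x) \<longlonglongrightarrow> \<phi> x"
proof -
  have "(\<lambda>k. test_cutoff \<phi> B (\<epsilon> k) x) \<longlonglongrightarrow> max 0 (min (\<phi> (max 0 x) - 0) (B - 0 * x))"
    unfolding test_cutoff_def using assms(1) by (intro tendsto_intros)
  then show ?thesis
    using assms by simp
qed

lemma coag_kernel_lipschitz_bound:
  fixes \<psi> :: "real \<Rightarrow> real"
  assumes lip: "L-lipschitz_on {0..} \<psi>" and "\<psi> 0 = 0" and "0 \<le> x" "0 \<le> y"
  shows "\<bar>(x + y) * (\<psi> (x + y) - \<psi> x - \<psi> y)\<bar> \<le> 4 * L * x * y"
proof -
  have lip': "\<bar>\<psi> a - \<psi> b\<bar> \<le> L * \<bar>a - b\<bar>" if "0 \<le> a" "0 \<le> b" for a b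
    using lipschitz_onD[OF lip, of a b] that by (simp add: dist_real_def)
  have "\<bar>\<psi> (x + y) - \<psi> x - \<psi> y\<bar> \<le> 2 * L * y"
    using lip'[of "x + y" x] lip'[of y 0] assms by simp
  moreover have "\<bar>\<psi> (x + y) - \<psi> x - \<psi> y\<bar> \<le> 2 * L * x"
    using lip'[of "x + y" y] lip'[of x 0] assms by simp
  ultimately have "x * \<bar>\<psi> (x + y) - \<psi> x - \<psi> y\<bar> + y * \<bar>\<psi> (x + y) - \<psi> x - \<psi> y\<bar>
      \<le> x * (2 * L * y) + y * (2 * L * x)"
    using assms by (intro add_mono mult_left_mono) auto
  moreover have "\<bar>(x + y) * (\<psi> (x + y) - \<psi> x - \<psi> y)\<bar> = (x + y) * \<bar>\<psi> (x + y) - \<psi> x - \<psi> y\<bar>"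
    using assms by (simp add: abs_mult)
  ultimately show ?thesis
    by (simp add: algebra_simps)
qed

section \<open>Solutions with unit mass\<close>

definition pos_density :: "(real \<Rightarrow> real \<Rightarrow> real) \<Rightarrow> real \<Rightarrow> real \<Rightarrow> real" where
  "pos_density n t x = indicator {0<..} x * n t x"

definition bernstein :: "(real \<Rightarrow> real \<Rightarrow> real) \<Rightarrow> real \<Rightarrow> real \<Rightarrow> real" where
  "bernstein n t \<eta> = (\<integral>x. (1 - exp (-(\<eta> * x))) * pos_density n t x \<partial>lborel)"

definition laplace_mass :: "(real \<Rightarrow> real \<Rightarrow> real) \<Rightarrow> real \<Rightarrow> real \<Rightarrow> real" where
  "laplace_mass n t \<eta> = (\<integral>x. x * exp (-(\<eta> * x)) * pos_density n t x \<partial>lborel)"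

locale add_coag_solution =
  fixes n :: "real \<Rightarrow> real \<Rightarrow> real"
  assumes sol: "smol_solution (\<lambda>x y. x + y) n"
    and conserv: "mass_conserving n"
    and unit_mass: "(LINT x:{0<..}|lborel. x * n 0 x) = 1"
begin

abbreviation "N \<equiv> pos_density n"
abbreviation "coag \<equiv> coag_op (\<lambda>x y. x + y) n"
abbreviation "F \<equiv> bernstein n"
abbreviation "P \<equiv> laplace_mass n"

lemma N_nonneg: "0 \<le> t \<Longrightarrow> 0 \<le> N t x"
  using sol by (auto simp: smol_solution_def pos_density_def indicator_def)

lemma N_eq_0 [simp]: "x \<le> 0 \<Longrightarrow> N t x = 0"
  by (simp add: pos_density_def)

lemma set_integral_eq_N: "(LINT x:{0<..}|lborel. g x * n t x) = (\<integral>x. g x * N t x \<partial>lborel)"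
  unfolding set_lebesgue_integral_def pos_density_def by (simp add: mult.left_commute)

lemma set_integrable_iff_N: "set_integrable lborel {0<..} (\<lambda>x. g x * n t x) \<longleftrightarrow> integrable lborel (\<lambda>x. g x * N t x)"
  unfolding set_integrable_def pos_density_def by (simp add: mult.left_commute)

lemma integrable_N: "0 \<le> t \<Longrightarrow> integrable lborel (N t)"
  using sol set_integrable_iff_N[of "\<lambda>_. 1" t] by (simp add: smol_solution_def)

lemma integrable_mass: "0 \<le> t \<Longrightarrow> integrable lborel (\<lambda>x. x * N t x)"
  using sol set_integrable_iff_N[of "\<lambda>x. x" t] by (simp add: smol_solution_def)

lemma borel_measurable_N: "0 \<le> t \<Longrightarrow> N t \<in> borel_measurable borel"
  using integrable_N borel_measurable_integrable by auto

lemma mass_eq_1: "0 \<le> t \<Longrightarrow> (\<integral>x. x * N t x \<partial>lborel) = 1"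
  using conserv unit_mass set_integral_eq_N[of "\<lambda>x. x"] by (simp add: mass_conserving_def)

lemma integrable_sublinear:
  assumes "0 \<le> t" and g: "g \<in> borel_measurable borel"
    and bound: "\<And>x. 0 < x \<Longrightarrow> \<bar>g x\<bar> \<le> a + b * x" and "0 \<le> a" "0 \<le> b"
  shows "integrable lborel (\<lambda>x. g x * N t x)"
proof (rule Bochner_Integration.integrable_bound)
  show "integrable lborel (\<lambda>x. a * N t x + b * (x * N t x))"
    using integrable_N integrable_mass \<open>0 \<le> t\<close> by auto
  show "(\<lambda>x. g x * N t x) \<in> borel_measurable lborel"
    using g borel_measurable_N[OF \<open>0 \<le> t\<close>] by measurable
  have "norm (g x * N t x) \<le> a * N t x + b * (x * N t x)" for x
  proof (cases "0 < x")
    case True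
    then show ?thesis
      using mult_right_mono[OF bound[OF True] N_nonneg[OF \<open>0 \<le> t\<close>, of x]] N_nonneg[OF \<open>0 \<le> t\<close>, of x]
      by (simp add: abs_mult algebra_simps)
  qed simp
  then show "AE x in lborel. norm (g x * N t x) \<le> norm (a * N t x + b * (x * N t x))"
    by (intro AE_I2) (metis abs_ge_self order_trans real_norm_def)
qed

lemma abs_integral_le_mass:
  assumes "0 \<le> t" and bound: "\<And>x. 0 < x \<Longrightarrow> \<bar>g x\<bar> \<le> c * x"
  shows "\<bar>\<integral>x. g x * N t x \<partial>lborel\<bar> \<le> c"
proof -
  have "\<bar>g x * N t x\<bar> \<le> c * (x * N t x)" for x
  proof (cases "0 < x")
    case True
    then show ?thesis
      using mult_right_mono[OF bound[OF True] N_nonneg[OF \<open>0 \<le> t\<close>, of x]] N_nonneg[OF \<open>0 \<le> t\<close>, of x]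
      by (simp add: abs_mult mult.assoc)
  qed simp
  then have "\<bar>\<integral>x. g x * N t x \<partial>lborel\<bar> \<le> (\<integral>x. c * (x * N t x) \<partial>lborel)"
    using integrable_mass[OF \<open>0 \<le> t\<close>] by (intro abs_integral_le_integral) auto
  then show ?thesis
    using mass_eq_1[OF \<open>0 \<le> t\<close>] by simp
qed

lemma weak_form:
  assumes "0 \<le> t" "coag_test_fun \<phi>"
  shows "set_integrable lborel {0..t} (\<lambda>s. coag s \<phi>)"
    and "(\<integral>x. \<phi> x * N t x \<partial>lborel) = (\<integral>x. \<phi> x * N 0 x \<partial>lborel) + (LINT s:{0..t}|lborel. coag s \<phi>)"
proof -
  have "set_integrable lborel {0..t} (\<lambda>s. coag s \<phi>) \<and>
      (LINT x:{0<..}|lborel. \<phi> x * n t x) = (LINT x:{0<..}|lborel. \<phi> x * n 0 x) + (LINT s:{0..t}|lborel. coag s \<phi>)"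
    using sol assms unfolding smol_solution_def by blast
  then show "set_integrable lborel {0..t} (\<lambda>s. coag s \<phi>)"
    and "(\<integral>x. \<phi> x * N t x \<partial>lborel) = (\<integral>x. \<phi> x * N 0 x \<partial>lborel) + (LINT s:{0..t}|lborel. coag s \<phi>)"
    by (simp_all only: set_integral_eq_N)
qed

lemma coag_op_eq:
  "coag s \<phi> = 1/2 * (\<integral>x. \<integral>y. (x + y) * (\<phi> (x + y) - \<phi> x - \<phi> y) * N s x * N s y \<partial>lborel \<partial>lborel)"
proof -
  have "(\<lambda>x. indicator {0<..} x *\<^sub>R (LINT y:{0<..}|lborel. (x + y) * (\<phi> (x + y) - \<phi> x - \<phi> y) * n s x * n s y))
      = (\<lambda>x. \<integral>y. (x + y) * (\<phi> (x + y) - \<phi> x - \<phi> y) * N s x * N s y \<partial>lborel)"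
  proof
    fix x
    have "(\<lambda>y. (x + y) * (\<phi> (x + y) - \<phi> x - \<phi> y) * N s x * N s y)
        = (\<lambda>y. indicator {0<..} x * (indicator {0<..} y *\<^sub>R ((x + y) * (\<phi> (x + y) - \<phi> x - \<phi> y) * n s x * n s y)))"
      by (auto simp: pos_density_def)
    then show "indicator {0<..} x *\<^sub>R (LINT y:{0<..}|lborel. (x + y) * (\<phi> (x + y) - \<phi> x - \<phi> y) * n s x * n s y)
        = (\<integral>y. (x + y) * (\<phi> (x + y) - \<phi> x - \<phi> y) * N s x * N s y \<partial>lborel)"
      by (simp add: set_lebesgue_integral_def)
  qed
  then show ?thesis
    by (simp add: coag_op_def set_lebesgue_integral_def)
qed


lemma coag_integrand_bound:
  assumes "0 \<le> s" and lip: "L-lipschitz_on {0..} \<psi>" and "\<psi> 0 = 0"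
  shows "\<bar>(x + y) * (\<psi> (x + y) - \<psi> x - \<psi> y) * N s x * N s y\<bar> \<le> 4 * L * (x * N s x) * (y * N s y)"
proof (cases "0 < x \<and> 0 < y")
  case True
  have "\<bar>(x + y) * (\<psi> (x + y) - \<psi> x - \<psi> y) * N s x * N s y\<bar>
      = \<bar>(x + y) * (\<psi> (x + y) - \<psi> x - \<psi> y)\<bar> * (N s x * N s y)"
    using N_nonneg[OF \<open>0 \<le> s\<close>] by (simp add: abs_mult)
  also have "\<dots> \<le> (4 * L * x * y) * (N s x * N s y)"
    using coag_kernel_lipschitz_bound[OF lip \<open>\<psi> 0 = 0\<close>, of x y] True N_nonneg[OF \<open>0 \<le> s\<close>]
    by (intro mult_right_mono) auto
  finally show ?thesis
    by (simp add: ac_simps)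
next
  case False
  then have "N s x = 0 \<or> N s y = 0"
    by auto
  then show ?thesis
    by auto
qed

lemma coag_inner_bound:
  assumes "0 \<le> s" and lip: "L-lipschitz_on {0..} \<psi>" and "\<psi> 0 = 0"
  shows "\<bar>\<integral>y. (x + y) * (\<psi> (x + y) - \<psi> x - \<psi> y) * N s x * N s y \<partial>lborel\<bar> \<le> 4 * L * (x * N s x)"
proof -
  have "\<bar>\<integral>y. (x + y) * (\<psi> (x + y) - \<psi> x - \<psi> y) * N s x * N s y \<partial>lborel\<bar>
      \<le> (\<integral>y. 4 * L * (x * N s x) * (y * N s y) \<partial>lborel)"
    using integrable_mass[OF \<open>0 \<le> s\<close>] coag_integrand_bound[OF assms]
    by (intro abs_integral_le_integral) auto
  also have "\<dots> = 4 * L * (x * N s x)"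
    using mass_eq_1[OF \<open>0 \<le> s\<close>] by simp
  finally show ?thesis .
qed

lemma coag_op_bound:
  assumes "0 \<le> s" and lip: "L-lipschitz_on {0..} \<psi>" and "\<psi> 0 = 0"
  shows "\<bar>coag s \<psi>\<bar> \<le> 2 * L"
proof -
  have "\<bar>\<integral>x. \<integral>y. (x + y) * (\<psi> (x + y) - \<psi> x - \<psi> y) * N s x * N s y \<partial>lborel \<partial>lborel\<bar>
      \<le> (\<integral>x. 4 * L * (x * N s x) \<partial>lborel)"
    using integrable_mass[OF \<open>0 \<le> s\<close>] coag_inner_bound[OF assms]
    by (intro abs_integral_le_integral) auto
  also have "\<dots> = 4 * L"
    using mass_eq_1[OF \<open>0 \<le> s\<close>] by simp
  finally show ?thesis
    by (simp add: coag_op_eq abs_mult)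
qed

lemma borel_measurable_coag_inner:
  assumes "0 \<le> s" and [measurable]: "\<psi> \<in> borel_measurable borel"
  shows "(\<lambda>x. \<integral>y. (x + y) * (\<psi> (x + y) - \<psi> x - \<psi> y) * N s x * N s y \<partial>lborel) \<in> borel_measurable lborel"
proof -
  note [measurable] = borel_measurable_N[OF \<open>0 \<le> s\<close>]
  have "(\<lambda>(x, y). (x + y) * (\<psi> (x + y) - \<psi> x - \<psi> y) * N s x * N s y) \<in> borel_measurable (lborel \<Otimes>\<^sub>M lborel)"
    by measurable
  then show ?thesis
    by (rule lborel.borel_measurable_lebesgue_integral)
qed

lemma coag_inner_tendsto:
  assumes "0 \<le> s"
    and meas: "\<And>k. \<psi>k k \<in> borel_measurable borel" "\<psi> \<in> borel_measurable borel"
    and lip: "\<And>k. L-lipschitz_on {0..} (\<psi>k k)" and zero: "\<And>k. \<psi>k k 0 = 0"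
    and lim: "\<And>x. 0 < x \<Longrightarrow> (\<lambda>k. \<psi>k k x) \<longlonglongrightarrow> \<psi> x"
  shows "(\<lambda>k. \<integral>y. (x + y) * (\<psi>k k (x + y) - \<psi>k k x - \<psi>k k y) * N s x * N s y \<partial>lborel)
    \<longlonglongrightarrow> (\<integral>y. (x + y) * (\<psi> (x + y) - \<psi> x - \<psi> y) * N s x * N s y \<partial>lborel)"
proof (rule integral_dominated_convergence[where w="\<lambda>y. 4 * L * (x * N s x) * (y * N s y)"])
  note [measurable] = borel_measurable_N[OF \<open>0 \<le> s\<close>] meas
  show "(\<lambda>y. (x + y) * (\<psi> (x + y) - \<psi> x - \<psi> y) * N s x * N s y) \<in> borel_measurable lborel"
    "(\<lambda>y. (x + y) * (\<psi>k k (x + y) - \<psi>k k x - \<psi>k k y) * N s x * N s y) \<in> borel_measurable lborel" for k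
    by measurable
  show "integrable lborel (\<lambda>y. 4 * L * (x * N s x) * (y * N s y))"
    using integrable_mass[OF \<open>0 \<le> s\<close>] by simp
  show "AE y in lborel. norm ((x + y) * (\<psi>k k (x + y) - \<psi>k k x - \<psi>k k y) * N s x * N s y)
      \<le> 4 * L * (x * N s x) * (y * N s y)" for k
    using coag_integrand_bound[OF \<open>0 \<le> s\<close> lip zero] by simp
  have "(\<lambda>k. (x + y) * (\<psi>k k (x + y) - \<psi>k k x - \<psi>k k y) * N s x * N s y)
      \<longlonglongrightarrow> (x + y) * (\<psi> (x + y) - \<psi> x - \<psi> y) * N s x * N s y" for y
  proof (cases "0 < x \<and> 0 < y")
    case True
    then show ?thesis
      by (intro tendsto_mult_right tendsto_mult_left tendsto_diff lim) auto
  next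
    case False
    then have "N s x = 0 \<or> N s y = 0"
      by auto
    then show ?thesis
      by auto
  qed
  then show "AE y in lborel. (\<lambda>k. (x + y) * (\<psi>k k (x + y) - \<psi>k k x - \<psi>k k y) * N s x * N s y)
      \<longlonglongrightarrow> (x + y) * (\<psi> (x + y) - \<psi> x - \<psi> y) * N s x * N s y"
    by simp
qed

lemma coag_op_tendsto:
  assumes "0 \<le> s"
    and meas: "\<And>k. \<psi>k k \<in> borel_measurable borel" "\<psi> \<in> borel_measurable borel"
    and lip: "\<And>k. L-lipschitz_on {0..} (\<psi>k k)" and zero: "\<And>k. \<psi>k k 0 = 0"
    and lim: "\<And>x. 0 < x \<Longrightarrow> (\<lambda>k. \<psi>k k x) \<longlonglongrightarrow> \<psi> x"
  shows "(\<lambda>k. coag s (\<psi>k k)) \<longlonglongrightarrow> coag s \<psi>"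
proof -
  let ?G = "\<lambda>k x y. (x + y) * (\<psi>k k (x + y) - \<psi>k k x - \<psi>k k y) * N s x * N s y"
  let ?H = "\<lambda>x y. (x + y) * (\<psi> (x + y) - \<psi> x - \<psi> y) * N s x * N s y"
  have "(\<lambda>k. \<integral>x. \<integral>y. ?G k x y \<partial>lborel \<partial>lborel) \<longlonglongrightarrow> (\<integral>x. \<integral>y. ?H x y \<partial>lborel \<partial>lborel)"
  proof (rule integral_dominated_convergence[where w="\<lambda>x. 4 * L * (x * N s x)"])
    show "(\<lambda>x. \<integral>y. ?H x y \<partial>lborel) \<in> borel_measurable lborel"
      "(\<lambda>x. \<integral>y. ?G k x y \<partial>lborel) \<in> borel_measurable lborel" for k
      using borel_measurable_coag_inner[OF \<open>0 \<le> s\<close>] meas by blast+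
    show "integrable lborel (\<lambda>x. 4 * L * (x * N s x))"
      using integrable_mass[OF \<open>0 \<le> s\<close>] by simp
    show "AE x in lborel. (\<lambda>k. \<integral>y. ?G k x y \<partial>lborel) \<longlonglongrightarrow> \<integral>y. ?H x y \<partial>lborel"
      using coag_inner_tendsto[OF assms] by simp
    show "AE x in lborel. norm (\<integral>y. ?G k x y \<partial>lborel) \<le> 4 * L * (x * N s x)" for k
      using coag_inner_bound[OF \<open>0 \<le> s\<close> lip zero] by simp
  qed
  then show ?thesis
    unfolding coag_op_eq by (intro tendsto_mult_left)
qed

lemma integral_mass_dominated_tendsto:
  assumes "0 \<le> t"
    and meas: "\<And>k. \<psi>k k \<in> borel_measurable borel" "\<psi> \<in> borel_measurable borel"
    and bound: "\<And>k x. 0 < x \<Longrightarrow> \<bar>\<psi>k k x\<bar> \<le> L * x"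
    and lim: "\<And>x. 0 < x \<Longrightarrow> (\<lambda>k. \<psi>k k x) \<longlonglongrightarrow> \<psi> x"
  shows "(\<lambda>k. \<integral>x. \<psi>k k x * N t x \<partial>lborel) \<longlonglongrightarrow> (\<integral>x. \<psi> x * N t x \<partial>lborel)"
proof (rule integral_dominated_convergence[where w="\<lambda>x. L * (x * N t x)"])
  note [measurable] = borel_measurable_N[OF \<open>0 \<le> t\<close>] meas
  show "(\<lambda>x. \<psi> x * N t x) \<in> borel_measurable lborel" "(\<lambda>x. \<psi>k k x * N t x) \<in> borel_measurable lborel" for k
    by measurable
  show "integrable lborel (\<lambda>x. L * (x * N t x))"
    using integrable_mass[OF \<open>0 \<le> t\<close>] by simp
  show "AE x in lborel. (\<lambda>k. \<psi>k k x * N t x) \<longlonglongrightarrow> \<psi> x * N t x"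
  proof (rule AE_I2)
    fix x
    show "(\<lambda>k. \<psi>k k x * N t x) \<longlonglongrightarrow> \<psi> x * N t x"
    proof (cases "0 < x")
      case True
      then show ?thesis
        by (intro tendsto_mult_right lim)
    qed simp
  qed
  show "AE x in lborel. norm (\<psi>k k x * N t x) \<le> L * (x * N t x)" for k
  proof (rule AE_I2)
    fix x
    show "norm (\<psi>k k x * N t x) \<le> L * (x * N t x)"
    proof (cases "0 < x")
      case True
      then show ?thesis
        using mult_right_mono[OF bound[OF True] N_nonneg[OF \<open>0 \<le> t\<close>, of x]] N_nonneg[OF \<open>0 \<le> t\<close>, of x]
        by (simp add: abs_mult mult.assoc)
    qed simp
  qed
qed

lemma weak_form_lipschitz:
  assumes "0 \<le> t" and cont: "continuous_on UNIV \<phi>"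
    and lip: "L-lipschitz_on {0..} \<phi>" and "\<phi> 0 = 0"
    and bounds: "\<And>x. 0 \<le> x \<Longrightarrow> 0 \<le> \<phi> x \<and> \<phi> x \<le> B"
  shows "set_integrable lborel {0..t} (\<lambda>s. coag s \<phi>)"
    and "(\<integral>x. \<phi> x * N t x \<partial>lborel) = (\<integral>x. \<phi> x * N 0 x \<partial>lborel) + (LINT s:{0..t}|lborel. coag s \<phi>)"
proof -
  define \<phi>k where "\<phi>k k = test_cutoff \<phi> B (1 / real (Suc k))" for k
  have test: "coag_test_fun (\<phi>k k)" and zero: "\<phi>k k 0 = 0" and lipk: "(L + 1)-lipschitz_on {0..} (\<phi>k k)" for k
    unfolding \<phi>k_def using lip \<open>\<phi> 0 = 0\<close>
    by (auto intro: coag_test_fun_test_cutoff test_cutoff_0 lipschitz_on_test_cutoff)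
  have lim: "(\<lambda>k. \<phi>k k x) \<longlonglongrightarrow> \<phi> x" if "0 < x" for x
    unfolding \<phi>k_def using LIMSEQ_Suc[OF lim_const_over_n[of 1]] that bounds[of x]
    by (intro tendsto_test_cutoff) auto
  have meas: "\<phi>k k \<in> borel_measurable borel" "\<phi> \<in> borel_measurable borel" for k
    using test[of k] cont by (auto simp: coag_test_fun_def intro: borel_measurable_continuous_onI)
  have bound: "\<bar>\<phi>k k x\<bar> \<le> (L + 1) * x" if "0 < x" for k x
    using lipschitz_onD[OF lipk, of x 0 k] that zero by (simp add: dist_real_def)
  have coag_lim: "(\<lambda>k. coag s (\<phi>k k)) \<longlonglongrightarrow> coag s \<phi>" if "s \<in> {0..t}" for s
    using that by (intro coag_op_tendsto[OF _ meas lipk zero lim]) simp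
  have coag_bound: "\<bar>coag s (\<phi>k k)\<bar> \<le> 2 * (L + 1)" if "s \<in> {0..t}" for k s
    using that by (intro coag_op_bound[OF _ lipk zero]) simp
  note time = set_integral_Icc_bounded_convergence[where f="\<lambda>k s. coag s (\<phi>k k)",
      OF weak_form(1)[OF \<open>0 \<le> t\<close> test] coag_lim coag_bound]
  then show "set_integrable lborel {0..t} (\<lambda>s. coag s \<phi>)"
    by simp
  have "(\<lambda>k. \<integral>x. \<phi>k k x * N t x \<partial>lborel)
      \<longlonglongrightarrow> (\<integral>x. \<phi> x * N 0 x \<partial>lborel) + (LINT s:{0..t}|lborel. coag s \<phi>)"
    unfolding weak_form(2)[OF \<open>0 \<le> t\<close> test]
    by (intro tendsto_add time(2) integral_mass_dominated_tendsto[OF _ meas bound lim]) simp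
  with integral_mass_dominated_tendsto[OF \<open>0 \<le> t\<close> meas bound lim]
  show "(\<integral>x. \<phi> x * N t x \<partial>lborel) = (\<integral>x. \<phi> x * N 0 x \<partial>lborel) + (LINT s:{0..t}|lborel. coag s \<phi>)"
    by (rule LIMSEQ_unique)
qed


section \<open>The Bernstein transform and its evolution\<close>

lemma integrable_bernstein_kernel: "0 \<le> t \<Longrightarrow> 0 \<le> \<eta> \<Longrightarrow> integrable lborel (\<lambda>x. (1 - exp (-(\<eta> * x))) * N t x)"
  by (rule integrable_sublinear[where a=1 and b=0]) auto

lemma integrable_laplace_kernel: "0 \<le> t \<Longrightarrow> 0 \<le> \<eta> \<Longrightarrow> integrable lborel (\<lambda>x. x * exp (-(\<eta> * x)) * N t x)"
  by (rule integrable_sublinear[where a=0 and b=1]) (auto simp: abs_mult mult_left_le)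

lemma bernstein_bounds:
  assumes "0 \<le> t" "0 \<le> \<eta>"
  shows "0 \<le> F t \<eta> \<and> F t \<eta> \<le> \<eta>"
proof
  have "0 \<le> (1 - exp (-(\<eta> * x))) * N t x" for x
  proof (cases "0 < x")
    case True
    then show ?thesis
      using one_minus_exp_neg_bounds[of "\<eta> * x"] N_nonneg assms by simp
  qed simp
  then show "0 \<le> F t \<eta>"
    unfolding bernstein_def by (intro integral_nonneg_AE AE_I2)
  have "\<bar>F t \<eta>\<bar> \<le> \<eta>"
    unfolding bernstein_def using assms one_minus_exp_neg_bounds[of "\<eta> * _"]
    by (intro abs_integral_le_mass) auto
  then show "F t \<eta> \<le> \<eta>"
    by simp
qed

lemma laplace_mass_bounds:
  assumes "0 \<le> t" "0 \<le> \<eta>"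
  shows "0 \<le> P t \<eta> \<and> P t \<eta> \<le> 1"
proof
  have "0 \<le> x * exp (-(\<eta> * x)) * N t x" for x
    using N_nonneg[OF \<open>0 \<le> t\<close>] by (cases "0 < x") auto
  then show "0 \<le> P t \<eta>"
    unfolding laplace_mass_def by (intro integral_nonneg_AE AE_I2)
  have "\<bar>P t \<eta>\<bar> \<le> 1"
    unfolding laplace_mass_def using assms
    by (intro abs_integral_le_mass) (auto simp: abs_mult mult_left_le)
  then show "P t \<eta> \<le> 1"
    by simp
qed

lemma bernstein_diff:
  assumes "0 \<le> t" "0 \<le> \<eta>" "0 \<le> \<eta>'"
  shows "F t \<eta>' - F t \<eta> = (\<integral>x. ((1 - exp (-(\<eta>' * x))) - (1 - exp (-(\<eta> * x)))) * N t x \<partial>lborel)"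
proof -
  have "F t \<eta>' - F t \<eta> = (\<integral>x. (1 - exp (-(\<eta>' * x))) * N t x - (1 - exp (-(\<eta> * x))) * N t x \<partial>lborel)"
    unfolding bernstein_def
    using assms by (intro Bochner_Integration.integral_diff[symmetric] integrable_bernstein_kernel)
  then show ?thesis
    by (simp only: left_diff_distrib)
qed

lemma laplace_mass_diff:
  assumes "0 \<le> t" "0 \<le> \<eta>" "0 \<le> \<eta>'"
  shows "P t \<eta> - P t \<eta>' = (\<integral>x. (x * exp (-(\<eta> * x)) - x * exp (-(\<eta>' * x))) * N t x \<partial>lborel)"
proof -
  have "P t \<eta> - P t \<eta>' = (\<integral>x. x * exp (-(\<eta> * x)) * N t x - x * exp (-(\<eta>' * x)) * N t x \<partial>lborel)"
    unfolding laplace_mass_def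
    using assms by (intro Bochner_Integration.integral_diff[symmetric] integrable_laplace_kernel)
  then show ?thesis
    by (simp only: left_diff_distrib)
qed

lemma bernstein_lipschitz:
  assumes "0 \<le> t" "0 \<le> \<eta>" "0 \<le> \<eta>'"
  shows "\<bar>F t \<eta>' - F t \<eta>\<bar> \<le> \<bar>\<eta>' - \<eta>\<bar>"
proof -
  have "\<bar>(1 - exp (-(\<eta>' * x))) - (1 - exp (-(\<eta> * x)))\<bar> \<le> \<bar>\<eta>' - \<eta>\<bar> * x" if "0 < x" for x
  proof -
    have "\<bar>exp (-(\<eta> * x)) - exp (-(\<eta>' * x))\<bar> \<le> \<bar>\<eta> * x - \<eta>' * x\<bar>"
      using that assms by (intro exp_neg_lipschitz) auto
    also have "\<dots> = \<bar>\<eta>' - \<eta>\<bar> * x"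
      using that by (simp add: abs_mult left_diff_distrib[symmetric] abs_minus_commute)
    finally show ?thesis
      by simp
  qed
  then show ?thesis
    unfolding bernstein_diff[OF assms] using assms by (intro abs_integral_le_mass)
qed

lemma bernstein_mono:
  assumes "0 \<le> t" "0 \<le> \<eta>" "\<eta> \<le> \<eta>'"
  shows "F t \<eta> \<le> F t \<eta>'"
proof -
  have "0 \<le> ((1 - exp (-(\<eta>' * x))) - (1 - exp (-(\<eta> * x)))) * N t x" for x
  proof (cases "0 < x")
    case True
    then show ?thesis
      using assms N_nonneg mult_right_mono[OF \<open>\<eta> \<le> \<eta>'\<close>, of x] by simp
  qed simp
  then have "0 \<le> (\<integral>x. ((1 - exp (-(\<eta>' * x))) - (1 - exp (-(\<eta> * x)))) * N t x \<partial>lborel)"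
    by (intro integral_nonneg_AE AE_I2)
  then show ?thesis
    using bernstein_diff[of t \<eta> \<eta>'] assms by simp
qed

lemma laplace_mass_lipschitz:
  assumes "0 \<le> t" "0 < m" "m \<le> \<eta>" "m \<le> \<eta>'"
  shows "\<bar>P t \<eta> - P t \<eta>'\<bar> \<le> \<bar>\<eta> - \<eta>'\<bar> / m"
  using assms laplace_kernel_lipschitz[of m \<eta> \<eta>']
  by (subst laplace_mass_diff) (auto intro!: abs_integral_le_mass)

lemma bernstein_taylor:
  assumes "0 \<le> t" "0 < m" "m \<le> \<eta>" "m \<le> \<eta>'"
  shows "\<bar>F t \<eta>' - F t \<eta> - (\<eta>' - \<eta>) * P t \<eta>\<bar> \<le> (\<eta>' - \<eta>)\<^sup>2 / m"
proof -
  have "0 \<le> \<eta>" "0 \<le> \<eta>'"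
    using assms by auto
  then have "integrable lborel (\<lambda>x. (1 - exp (-(\<eta>' * x))) * N t x - (1 - exp (-(\<eta> * x))) * N t x)"
    using assms by (intro Bochner_Integration.integrable_diff integrable_bernstein_kernel)
  then have int_diff: "integrable lborel (\<lambda>x. ((1 - exp (-(\<eta>' * x))) - (1 - exp (-(\<eta> * x)))) * N t x)"
    by (simp only: left_diff_distrib)
  have int_laplace: "integrable lborel (\<lambda>x. (\<eta>' - \<eta>) * (x * exp (-(\<eta> * x)) * N t x))"
    using assms \<open>0 \<le> \<eta>\<close> by (intro integrable_mult_right integrable_laplace_kernel)
  have "F t \<eta>' - F t \<eta> - (\<eta>' - \<eta>) * P t \<eta>
      = (\<integral>x. ((1 - exp (-(\<eta>' * x))) - (1 - exp (-(\<eta> * x)))) * N t x - (\<eta>' - \<eta>) * (x * exp (-(\<eta> * x)) * N t x) \<partial>lborel)"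
    unfolding bernstein_diff[OF \<open>0 \<le> t\<close> \<open>0 \<le> \<eta>\<close> \<open>0 \<le> \<eta>'\<close>] laplace_mass_def
      Bochner_Integration.integral_diff[OF int_diff int_laplace]
    by simp
  also have "\<dots> = (\<integral>x. ((1 - exp (-(\<eta>' * x))) - (1 - exp (-(\<eta> * x))) - (\<eta>' - \<eta>) * (x * exp (-(\<eta> * x)))) * N t x \<partial>lborel)"
    by (simp add: algebra_simps)
  also have "\<bar>\<dots>\<bar> \<le> (\<eta>' - \<eta>)\<^sup>2 / m"
    using assms bernstein_kernel_taylor[of m \<eta> \<eta>'] by (intro abs_integral_le_mass) auto
  finally show ?thesis .
qed


lemma bernstein_weak_form:
  assumes "0 \<le> t" "0 \<le> \<eta>"
  shows "set_integrable lborel {0..t} (\<lambda>s. coag s (\<lambda>x. 1 - exp (-(\<eta> * x))))"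
    and "F t \<eta> = F 0 \<eta> + (LINT s:{0..t}|lborel. coag s (\<lambda>x. 1 - exp (-(\<eta> * x))))"
proof -
  have "continuous_on UNIV (\<lambda>x. 1 - exp (-(\<eta> * x)))"
    by (intro continuous_intros)
  moreover have "0 \<le> 1 - exp (-(\<eta> * x)) \<and> 1 - exp (-(\<eta> * x)) \<le> 1" if "0 \<le> x" for x
    using that assms one_minus_exp_neg_bounds[of "\<eta> * x"] by simp
  ultimately show "set_integrable lborel {0..t} (\<lambda>s. coag s (\<lambda>x. 1 - exp (-(\<eta> * x))))"
    and "F t \<eta> = F 0 \<eta> + (LINT s:{0..t}|lborel. coag s (\<lambda>x. 1 - exp (-(\<eta> * x))))"
    using weak_form_lipschitz[OF \<open>0 \<le> t\<close> _ lipschitz_on_one_minus_exp_neg[OF \<open>0 \<le> \<eta>\<close>], where B=1]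
    unfolding bernstein_def by simp_all
qed

lemma laplace_mass_weak_form:
  assumes "0 \<le> t" "0 < \<eta>"
  shows "set_integrable lborel {0..t} (\<lambda>s. coag s (\<lambda>x. x * exp (-(\<eta> * x))))"
    and "P t \<eta> = P 0 \<eta> + (LINT s:{0..t}|lborel. coag s (\<lambda>x. x * exp (-(\<eta> * x))))"
proof -
  have "continuous_on UNIV (\<lambda>x. x * exp (-(\<eta> * x)))"
    by (intro continuous_intros)
  moreover have "0 \<le> x * exp (-(\<eta> * x)) \<and> x * exp (-(\<eta> * x)) \<le> 1 / \<eta>" if "0 \<le> x" for x
    using that assms mult_exp_neg_le[of \<eta> x] by simp
  moreover have "1-lipschitz_on {0..} (\<lambda>x. x * exp (-(\<eta> * x)))"
    using assms by (intro lipschitz_on_mult_exp_neg) simp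
  ultimately show "set_integrable lborel {0..t} (\<lambda>s. coag s (\<lambda>x. x * exp (-(\<eta> * x))))"
    and "P t \<eta> = P 0 \<eta> + (LINT s:{0..t}|lborel. coag s (\<lambda>x. x * exp (-(\<eta> * x))))"
    using weak_form_lipschitz[OF \<open>0 \<le> t\<close>, of "\<lambda>x. x * exp (-(\<eta> * x))" 1 "1 / \<eta>"]
    unfolding laplace_mass_def by simp_all
qed

text \<open>For \<phi> x = 1 - exp (-\<eta> x) one has \<phi> (x + y) - \<phi> x - \<phi> y = - \<phi> x \<phi> y, so the
  coagulation term factorises and the weak form closes on F and P.\<close>
lemma coag_op_bernstein_kernel:
  assumes "0 \<le> s" "0 \<le> \<eta>"
  shows "coag s (\<lambda>x. 1 - exp (-(\<eta> * x))) = -(1 - P s \<eta>) * F s \<eta>"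
proof -
  define \<phi> where "\<phi> x = 1 - exp (-(\<eta> * x))" for x
  have \<phi>_add: "\<phi> (x + y) - \<phi> x - \<phi> y = -(\<phi> x * \<phi> y)" for x y
    by (simp add: \<phi>_def distrib_left exp_add algebra_simps flip: exp_add)
  have int_\<phi>: "integrable lborel (\<lambda>y. \<phi> y * N s y)"
    unfolding \<phi>_def using assms by (rule integrable_bernstein_kernel)
  have x\<phi>: "y * \<phi> y * N s y = y * N s y - y * exp (-(\<eta> * y)) * N s y" for y
    by (simp add: \<phi>_def algebra_simps)
  have int_x\<phi>: "integrable lborel (\<lambda>y. y * \<phi> y * N s y)"
    unfolding x\<phi> using assms by (intro Bochner_Integration.integrable_diff integrable_mass integrable_laplace_kernel)
  have mass_\<phi>: "(\<integral>y. y * \<phi> y * N s y \<partial>lborel) = 1 - P s \<eta>"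
    unfolding x\<phi> laplace_mass_def using assms
    by (simp add: Bochner_Integration.integral_diff integrable_mass integrable_laplace_kernel mass_eq_1)
  have F_\<phi>: "(\<integral>y. \<phi> y * N s y \<partial>lborel) = F s \<eta>"
    unfolding \<phi>_def bernstein_def ..
  have inner: "(\<integral>y. (x + y) * (\<phi> (x + y) - \<phi> x - \<phi> y) * N s x * N s y \<partial>lborel)
      = -(\<phi> x * N s x) * (x * F s \<eta> + (1 - P s \<eta>))" for x
  proof -
    have "(\<integral>y. (x + y) * (\<phi> (x + y) - \<phi> x - \<phi> y) * N s x * N s y \<partial>lborel)
        = (\<integral>y. -(\<phi> x * N s x) * (x * (\<phi> y * N s y) + y * \<phi> y * N s y) \<partial>lborel)"
      unfolding \<phi>_add by (simp add: algebra_simps)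
    also have "\<dots> = -(\<phi> x * N s x) * (x * F s \<eta> + (1 - P s \<eta>))"
      using int_\<phi> int_x\<phi> by (simp add: F_\<phi> mass_\<phi>)
    finally show ?thesis .
  qed
  have "(\<lambda>x. -(\<phi> x * N s x) * (x * F s \<eta> + (1 - P s \<eta>)))
      = (\<lambda>x. -(F s \<eta> * (x * \<phi> x * N s x) + (1 - P s \<eta>) * (\<phi> x * N s x)))"
    by (simp add: fun_eq_iff algebra_simps)
  then have outer: "(\<integral>x. -(\<phi> x * N s x) * (x * F s \<eta> + (1 - P s \<eta>)) \<partial>lborel) = -(2 * (1 - P s \<eta>) * F s \<eta>)"
    using int_\<phi> int_x\<phi> by (simp add: F_\<phi> mass_\<phi>)
  have "coag s \<phi> = 1/2 * -(2 * (1 - P s \<eta>) * F s \<eta>)"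
    unfolding coag_op_eq inner outer ..
  then show ?thesis
    by (simp add: \<phi>_def[abs_def] algebra_simps)
qed

lemma bernstein_evolution:
  assumes "0 \<le> t" "0 \<le> \<eta>"
  shows "set_integrable lborel {0..t} (\<lambda>s. -(1 - P s \<eta>) * F s \<eta>)"
    and "F t \<eta> = F 0 \<eta> + (LINT s:{0..t}|lborel. -(1 - P s \<eta>) * F s \<eta>)"
proof -
  have eq: "coag s (\<lambda>x. 1 - exp (-(\<eta> * x))) = -(1 - P s \<eta>) * F s \<eta>" if "s \<in> {0..t}" for s
    using that assms by (intro coag_op_bernstein_kernel) auto
  have "set_integrable lborel {0..t} (\<lambda>s. coag s (\<lambda>x. 1 - exp (-(\<eta> * x))))
      = set_integrable lborel {0..t} (\<lambda>s. -(1 - P s \<eta>) * F s \<eta>)"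
    by (rule set_integrable_cong) (use eq in auto)
  then show "set_integrable lborel {0..t} (\<lambda>s. -(1 - P s \<eta>) * F s \<eta>)"
    using bernstein_weak_form(1)[OF assms] by simp
  have "(LINT s:{0..t}|lborel. coag s (\<lambda>x. 1 - exp (-(\<eta> * x))))
      = (LINT s:{0..t}|lborel. -(1 - P s \<eta>) * F s \<eta>)"
    by (rule set_lebesgue_integral_cong) (use eq in auto)
  then show "F t \<eta> = F 0 \<eta> + (LINT s:{0..t}|lborel. -(1 - P s \<eta>) * F s \<eta>)"
    using bernstein_weak_form(2)[OF assms] by simp
qed

lemma bernstein_rhs_bound:
  assumes "0 \<le> s" "0 \<le> \<eta>"
  shows "\<bar>-(1 - P s \<eta>) * F s \<eta>\<bar> \<le> \<eta>"
  using bernstein_bounds[OF assms] laplace_mass_bounds[OF assms]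
    mult_mono[of "1 - P s \<eta>" 1 "F s \<eta>" \<eta>]
  by (simp add: abs_mult)

lemma bernstein_time_lipschitz:
  assumes "0 \<le> t" "0 \<le> r" "0 \<le> \<eta>"
  shows "\<bar>F t \<eta> - F r \<eta>\<bar> \<le> \<eta> * \<bar>t - r\<bar>"
proof -
  have "\<bar>(LINT s:{0..t}|lborel. -(1 - P s \<eta>) * F s \<eta>) - (LINT s:{0..r}|lborel. -(1 - P s \<eta>) * F s \<eta>)
      - (t - r) * 0\<bar> \<le> \<eta> * \<bar>t - r\<bar>"
  proof (rule set_integral_increment[OF \<open>0 \<le> r\<close> \<open>0 \<le> t\<close> bernstein_evolution(1)[OF \<open>0 \<le> t\<close> \<open>0 \<le> \<eta>\<close>]
        bernstein_evolution(1)[OF \<open>0 \<le> r\<close> \<open>0 \<le> \<eta>\<close>]])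
    fix s assume "min r t \<le> s"
    then show "\<bar>-(1 - P s \<eta>) * F s \<eta> - 0\<bar> \<le> \<eta>"
      using assms bernstein_rhs_bound[of s \<eta>] by simp
  qed
  then show ?thesis
    using bernstein_evolution(2)[OF \<open>0 \<le> t\<close> \<open>0 \<le> \<eta>\<close>] bernstein_evolution(2)[OF \<open>0 \<le> r\<close> \<open>0 \<le> \<eta>\<close>]
    by simp
qed

lemma laplace_mass_time_lipschitz:
  assumes "0 \<le> t" "0 \<le> r" "0 < \<eta>"
  shows "\<bar>P t \<eta> - P r \<eta>\<bar> \<le> 2 * \<bar>t - r\<bar>"
proof -
  have "\<bar>(LINT s:{0..t}|lborel. coag s (\<lambda>x. x * exp (-(\<eta> * x))))
      - (LINT s:{0..r}|lborel. coag s (\<lambda>x. x * exp (-(\<eta> * x)))) - (t - r) * 0\<bar> \<le> 2 * \<bar>t - r\<bar>"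
  proof (rule set_integral_increment[OF \<open>0 \<le> r\<close> \<open>0 \<le> t\<close> laplace_mass_weak_form(1)[OF \<open>0 \<le> t\<close> \<open>0 < \<eta>\<close>]
        laplace_mass_weak_form(1)[OF \<open>0 \<le> r\<close> \<open>0 < \<eta>\<close>]])
    fix s assume "min r t \<le> s"
    then have "\<bar>coag s (\<lambda>x. x * exp (-(\<eta> * x)))\<bar> \<le> 2 * 1"
      using assms by (intro coag_op_bound lipschitz_on_mult_exp_neg) auto
    then show "\<bar>coag s (\<lambda>x. x * exp (-(\<eta> * x))) - 0\<bar> \<le> 2"
      by simp
  qed
  then show ?thesis
    using laplace_mass_weak_form(2)[OF \<open>0 \<le> t\<close> \<open>0 < \<eta>\<close>] laplace_mass_weak_form(2)[OF \<open>0 \<le> r\<close> \<open>0 < \<eta>\<close>]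
    by simp
qed

lemma bernstein_rhs_lipschitz:
  assumes "0 \<le> r" "0 \<le> t" "0 < m" "m \<le> \<eta>" "\<eta> \<le> X" "m \<le> \<eta>'" "\<eta>' \<le> X"
  shows "\<bar>-(1 - P r \<eta>) * F r \<eta> - -(1 - P t \<eta>') * F t \<eta>'\<bar> \<le> (2 + X / m) * \<bar>\<eta> - \<eta>'\<bar> + 4 * X * \<bar>r - t\<bar>"
proof -
  have "0 \<le> \<eta>" "0 \<le> \<eta>'"
    using assms by auto
  have dF: "\<bar>F r \<eta> - F t \<eta>'\<bar> \<le> \<bar>\<eta> - \<eta>'\<bar> + X * \<bar>r - t\<bar>"
    using bernstein_lipschitz[OF \<open>0 \<le> r\<close> \<open>0 \<le> \<eta>'\<close> \<open>0 \<le> \<eta>\<close>]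
      bernstein_time_lipschitz[OF \<open>0 \<le> r\<close> \<open>0 \<le> t\<close> \<open>0 \<le> \<eta>'\<close>]
      mult_right_mono[OF \<open>\<eta>' \<le> X\<close> abs_ge_zero[of "r - t"]]
    by linarith
  have dP: "\<bar>P r \<eta> - P t \<eta>'\<bar> \<le> \<bar>\<eta> - \<eta>'\<bar> / m + 2 * \<bar>r - t\<bar>"
    using laplace_mass_lipschitz[OF \<open>0 \<le> r\<close> \<open>0 < m\<close> \<open>m \<le> \<eta>\<close> \<open>m \<le> \<eta>'\<close>]
      laplace_mass_time_lipschitz[of r t \<eta>'] assms
    by linarith
  have F_bounds: "0 \<le> F r \<eta>" "F r \<eta> \<le> X"
    using bernstein_bounds[OF \<open>0 \<le> r\<close> \<open>0 \<le> \<eta>\<close>] assms by auto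
  have P_bounds: "0 \<le> P t \<eta>'" "P t \<eta>' \<le> 1"
    using laplace_mass_bounds[OF \<open>0 \<le> t\<close> \<open>0 \<le> \<eta>'\<close>] by auto
  have "-(1 - P r \<eta>) * F r \<eta> - -(1 - P t \<eta>') * F t \<eta>'
      = (F t \<eta>' - F r \<eta>) + (P r \<eta> - P t \<eta>') * F r \<eta> + P t \<eta>' * (F r \<eta> - F t \<eta>')"
    by (simp add: algebra_simps)
  moreover have "\<bar>(P r \<eta> - P t \<eta>') * F r \<eta>\<bar> \<le> (\<bar>\<eta> - \<eta>'\<bar> / m + 2 * \<bar>r - t\<bar>) * X"
    unfolding abs_mult using dP F_bounds by (intro mult_mono) auto
  moreover have "\<bar>P t \<eta>' * (F r \<eta> - F t \<eta>')\<bar> \<le> 1 * (\<bar>\<eta> - \<eta>'\<bar> + X * \<bar>r - t\<bar>)"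
    unfolding abs_mult using dF P_bounds by (intro mult_mono) auto
  moreover have "(\<bar>\<eta> - \<eta>'\<bar> / m + 2 * \<bar>r - t\<bar>) * X + 2 * (\<bar>\<eta> - \<eta>'\<bar> + X * \<bar>r - t\<bar>)
      = (2 + X / m) * \<bar>\<eta> - \<eta>'\<bar> + 4 * X * \<bar>r - t\<bar>"
    by (simp add: algebra_simps)
  ultimately show ?thesis
    using dF abs_triangle_ineq[of "(F t \<eta>' - F r \<eta>) + (P r \<eta> - P t \<eta>') * F r \<eta>" "P t \<eta>' * (F r \<eta> - F t \<eta>')"]
      abs_triangle_ineq[of "F t \<eta>' - F r \<eta>" "(P r \<eta> - P t \<eta>') * F r \<eta>"]
    by (simp add: abs_minus_commute[of "F t \<eta>'"])
qed


lemma bernstein_time_taylor: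
  assumes "0 \<le> s" "0 \<le> t" "0 < m" "m \<le> \<eta>" "\<eta> \<le> X" "m \<le> \<eta>'" "\<eta>' \<le> X"
  shows "\<bar>F s \<eta> - F t \<eta> - (s - t) * (-(1 - P t \<eta>') * F t \<eta>')\<bar>
    \<le> ((2 + X / m) * \<bar>\<eta> - \<eta>'\<bar> + 4 * X * \<bar>s - t\<bar>) * \<bar>s - t\<bar>"
proof -
  have "0 \<le> \<eta>"
    using assms by simp
  have "\<bar>(LINT r:{0..s}|lborel. -(1 - P r \<eta>) * F r \<eta>) - (LINT r:{0..t}|lborel. -(1 - P r \<eta>) * F r \<eta>)
      - (s - t) * (-(1 - P t \<eta>') * F t \<eta>')\<bar> \<le> ((2 + X / m) * \<bar>\<eta> - \<eta>'\<bar> + 4 * X * \<bar>s - t\<bar>) * \<bar>s - t\<bar>"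
  proof (rule set_integral_increment[OF \<open>0 \<le> t\<close> \<open>0 \<le> s\<close> bernstein_evolution(1)[OF \<open>0 \<le> s\<close> \<open>0 \<le> \<eta>\<close>]
        bernstein_evolution(1)[OF \<open>0 \<le> t\<close> \<open>0 \<le> \<eta>\<close>]])
    fix r assume r: "min t s \<le> r" "r \<le> max t s"
    then have "0 \<le> r" "\<bar>r - t\<bar> \<le> \<bar>s - t\<bar>"
      using assms by (auto simp: min_def max_def split: if_splits)
    moreover have "0 \<le> X"
      using assms by simp
    ultimately have "4 * X * \<bar>r - t\<bar> \<le> 4 * X * \<bar>s - t\<bar>"
      by (intro mult_left_mono) auto
    then show "\<bar>-(1 - P r \<eta>) * F r \<eta> - -(1 - P t \<eta>') * F t \<eta>'\<bar>
        \<le> (2 + X / m) * \<bar>\<eta> - \<eta>'\<bar> + 4 * X * \<bar>s - t\<bar>"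
      using bernstein_rhs_lipschitz[of r t m \<eta> X \<eta>'] assms \<open>0 \<le> r\<close> by linarith
  qed
  then show ?thesis
    using bernstein_evolution(2)[OF \<open>0 \<le> s\<close> \<open>0 \<le> \<eta>\<close>] bernstein_evolution(2)[OF \<open>0 \<le> t\<close> \<open>0 \<le> \<eta>\<close>]
    by simp
qed

lemma lipschitz_on_bernstein: "0 \<le> t \<Longrightarrow> 1-lipschitz_on {0..} (F t)"
  using bernstein_lipschitz by (intro lipschitz_onI) (auto simp: dist_real_def)

end

section \<open>Characteristics\<close>

text \<open>Characteristics of the Burgers-type evolution of F, with c standing for F 0 \<xi>.\<close>
definition characteristic :: "real \<Rightarrow> real \<Rightarrow> real \<Rightarrow> real" where
  "characteristic \<xi> c s = \<xi> - (1 - exp (-s)) * c"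

lemma characteristic_bounds:
  assumes "0 \<le> c" "c \<le> \<xi>" "0 \<le> s"
  shows "\<xi> * exp (-s) \<le> characteristic \<xi> c s" and "characteristic \<xi> c s \<le> \<xi>"
proof -
  have "0 \<le> (\<xi> - c) * (1 - exp (-s))"
    using assms by simp
  then show "\<xi> * exp (-s) \<le> characteristic \<xi> c s"
    by (simp add: characteristic_def algebra_simps)
  show "characteristic \<xi> c s \<le> \<xi>"
    using assms by (simp add: characteristic_def)
qed

lemma characteristic_lipschitz:
  assumes "0 \<le> c" "0 \<le> s" "0 \<le> t"
  shows "\<bar>characteristic \<xi> c s - characteristic \<xi> c t\<bar> \<le> c * \<bar>s - t\<bar>"
proof -
  have "characteristic \<xi> c s - characteristic \<xi> c t = c * (exp (-s) - exp (-t))"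
    by (simp add: characteristic_def algebra_simps)
  then show ?thesis
    using exp_neg_lipschitz[of s t] assms by (simp add: abs_mult mult_left_mono)
qed

lemma characteristic_taylor:
  assumes "0 \<le> c" "0 \<le> s" "0 \<le> t"
  shows "\<bar>characteristic \<xi> c s - characteristic \<xi> c t - (s - t) * (- exp (-t) * c)\<bar> \<le> c * (s - t)\<^sup>2"
proof -
  have "characteristic \<xi> c s - characteristic \<xi> c t - (s - t) * (- exp (-t) * c)
      = c * (exp (-s) - exp (-t) + (s - t) * exp (-t))"
    by (simp add: characteristic_def algebra_simps)
  moreover have "\<bar>exp (-s) - exp (-t) + (s - t) * exp (-t)\<bar> \<le> (s - t)\<^sup>2"
    using exp_neg_taylor_le[where a=t and b=s] assms mult_left_le[of "exp (- min t s)" "(s - t)\<^sup>2"] by simp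
  ultimately show ?thesis
    using assms by (simp add: abs_mult mult_left_mono)
qed

context add_coag_solution
begin

lemma bernstein_curve_expansion:
  assumes "0 \<le> s" "0 \<le> t" "0 < m" "0 \<le> c" "m \<le> a" "a \<le> X" "m \<le> b" "b \<le> X"
    and lip: "\<bar>a - b\<bar> \<le> c * \<bar>s - t\<bar>" and taylor: "\<bar>a - b - (s - t) * D\<bar> \<le> c * (s - t)\<^sup>2"
  shows "\<bar>F s a - F t b - (s - t) * (-(1 - P t b) * F t b + P t b * D)\<bar>
    \<le> ((2 + X / m) * c + 4 * X + c\<^sup>2 / m + c) * (s - t)\<^sup>2"
proof -
  let ?A = "F s a - F t a - (s - t) * (-(1 - P t b) * F t b)"
  let ?B = "F t a - F t b - (a - b) * P t b"
  let ?C = "P t b * (a - b - (s - t) * D)"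
  have "\<bar>?A\<bar> \<le> ((2 + X / m) * \<bar>a - b\<bar> + 4 * X * \<bar>s - t\<bar>) * \<bar>s - t\<bar>"
    using assms by (intro bernstein_time_taylor) auto
  also have "\<dots> \<le> ((2 + X / m) * (c * \<bar>s - t\<bar>) + 4 * X * \<bar>s - t\<bar>) * \<bar>s - t\<bar>"
    using lip assms by (intro mult_right_mono add_right_mono mult_left_mono) auto
  also have "\<dots> = ((2 + X / m) * c + 4 * X) * \<bar>s - t\<bar>\<^sup>2"
    by (simp only: power2_eq_square algebra_simps)
  finally have A: "\<bar>?A\<bar> \<le> ((2 + X / m) * c + 4 * X) * (s - t)\<^sup>2"
    by simp
  have "\<bar>?B\<bar> \<le> (a - b)\<^sup>2 / m"
    using assms by (intro bernstein_taylor) auto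
  also have "\<dots> \<le> (c * \<bar>s - t\<bar>)\<^sup>2 / m"
    using power_mono[OF lip abs_ge_zero, of 2] \<open>0 < m\<close> by (intro divide_right_mono) auto
  finally have B: "\<bar>?B\<bar> \<le> c\<^sup>2 / m * (s - t)\<^sup>2"
    by (simp add: power_mult_distrib)
  have "0 \<le> P t b" "P t b \<le> 1"
    using laplace_mass_bounds[of t b] assms by auto
  then have C: "\<bar>?C\<bar> \<le> c * (s - t)\<^sup>2"
    using taylor mult_mono[of "P t b" 1] by (simp add: abs_mult)
  have "F s a - F t b - (s - t) * (-(1 - P t b) * F t b + P t b * D) = ?A + ?B + ?C"
    by (simp add: algebra_simps)
  then have "\<bar>F s a - F t b - (s - t) * (-(1 - P t b) * F t b + P t b * D)\<bar>
      \<le> ((2 + X / m) * c + 4 * X) * (s - t)\<^sup>2 + c\<^sup>2 / m * (s - t)\<^sup>2 + c * (s - t)\<^sup>2"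
    using A B C abs_triangle_ineq[of "?A + ?B" ?C] abs_triangle_ineq[of ?A ?B] by linarith
  then show ?thesis
    by (simp add: algebra_simps)
qed

lemma has_real_derivative_bernstein_characteristic:
  assumes "0 < \<xi>" "0 < t"
  defines "\<gamma> \<equiv> characteristic \<xi> (F 0 \<xi>)"
  shows "((\<lambda>s. F s (\<gamma> s)) has_real_derivative
    -(1 - P t (\<gamma> t)) * F t (\<gamma> t) + P t (\<gamma> t) * (- exp (-t) * F 0 \<xi>)) (at t)"
proof -
  define c where "c = F 0 \<xi>"
  define m where "m = \<xi> * exp (-(t + 1))"
  have c: "0 \<le> c" "c \<le> \<xi>" and "0 < m"
    using bernstein_bounds[of 0 \<xi>] assms by (auto simp: c_def m_def)
  have \<gamma>_between: "m \<le> \<gamma> s \<and> \<gamma> s \<le> \<xi>" if "0 \<le> s" "s \<le> t + 1" for s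
  proof -
    have "m \<le> \<xi> * exp (-s)"
      unfolding m_def using that assms by (intro mult_left_mono) auto
    then show ?thesis
      using characteristic_bounds[OF c that(1)] by (simp add: \<gamma>_def c_def)
  qed
  show ?thesis
    unfolding c_def[symmetric]
  proof (rule has_real_derivative_quadratic_remainder[where \<delta>="min t 1"
        and K="(2 + \<xi> / m) * c + 4 * \<xi> + c\<^sup>2 / m + c"])
    fix s assume "\<bar>s - t\<bar> < min t 1"
    then have s: "0 \<le> s" "s \<le> t + 1"
      by (auto simp: abs_less_iff)
    have t: "0 \<le> t" "t \<le> t + 1"
      using assms by auto
    show "\<bar>F s (\<gamma> s) - F t (\<gamma> t) - (s - t) * (-(1 - P t (\<gamma> t)) * F t (\<gamma> t) + P t (\<gamma> t) * (- exp (-t) * c))\<bar>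
        \<le> ((2 + \<xi> / m) * c + 4 * \<xi> + c\<^sup>2 / m + c) * (s - t)\<^sup>2"
      using \<gamma>_between[OF s] \<gamma>_between[OF t] s t c \<open>0 < m\<close>
        characteristic_lipschitz[OF c(1) s(1) t(1), of \<xi>] characteristic_taylor[OF c(1) s(1) t(1), of \<xi>]
      unfolding \<gamma>_def c_def[symmetric] by (intro bernstein_curve_expansion) auto
  qed (use assms in simp)
qed

lemma lipschitz_on_bernstein_characteristic:
  assumes "0 < \<xi>"
  shows "(\<xi> + F 0 \<xi>)-lipschitz_on {0..} (\<lambda>s. F s (characteristic \<xi> (F 0 \<xi>) s))"
proof (rule lipschitz_onI)
  define c where "c = F 0 \<xi>"
  have c: "0 \<le> c" "c \<le> \<xi>"
    using bernstein_bounds[of 0 \<xi>] assms by (auto simp: c_def)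
  let ?\<gamma> = "characteristic \<xi> c"
  fix s r :: real assume "s \<in> {0..}" "r \<in> {0..}"
  then have "0 \<le> s" "0 \<le> r"
    by auto
  have \<gamma>_bounds: "0 \<le> ?\<gamma> u" "?\<gamma> u \<le> \<xi>" if "0 \<le> u" for u
    using characteristic_bounds[OF c that] mult_pos_pos[OF \<open>0 < \<xi>\<close> exp_gt_zero[of "-u"]] by linarith+
  have "\<bar>F s (?\<gamma> s) - F r (?\<gamma> s)\<bar> \<le> \<xi> * \<bar>s - r\<bar>"
    using bernstein_time_lipschitz[OF \<open>0 \<le> s\<close> \<open>0 \<le> r\<close> \<gamma>_bounds(1)[OF \<open>0 \<le> s\<close>]]
      mult_right_mono[OF \<gamma>_bounds(2)[OF \<open>0 \<le> s\<close>] abs_ge_zero[of "s - r"]]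
    by linarith
  moreover have "\<bar>F r (?\<gamma> s) - F r (?\<gamma> r)\<bar> \<le> c * \<bar>s - r\<bar>"
    using bernstein_lipschitz[OF \<open>0 \<le> r\<close> \<gamma>_bounds(1)[OF \<open>0 \<le> r\<close>] \<gamma>_bounds(1)[OF \<open>0 \<le> s\<close>]]
      characteristic_lipschitz[OF c(1) \<open>0 \<le> s\<close> \<open>0 \<le> r\<close>, of \<xi>]
    by linarith
  ultimately show "dist (F s (?\<gamma> s)) (F r (?\<gamma> r)) \<le> (\<xi> + F 0 \<xi>) * dist s r"
    by (simp add: dist_real_def algebra_simps c_def)
next
  show "0 \<le> \<xi> + F 0 \<xi>"
    using bernstein_bounds[of 0 \<xi>] assms by simp
qed

lemma bernstein_along_characteristic:
  assumes "0 < \<xi>" "0 \<le> T"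
  shows "F T (characteristic \<xi> (F 0 \<xi>) T) = exp (-T) * F 0 \<xi>"
proof -
  define c where "c = F 0 \<xi>"
  define \<gamma> where "\<gamma> = characteristic \<xi> c"
  have c: "0 \<le> c" "c \<le> \<xi>"
    using bernstein_bounds[of 0 \<xi>] assms by (auto simp: c_def)
  have \<gamma>_nonneg: "0 \<le> \<gamma> s" if "0 \<le> s" for s
    using characteristic_bounds(1)[OF c that] mult_pos_pos[OF \<open>0 < \<xi>\<close> exp_gt_zero[of "-s"]]
    unfolding \<gamma>_def by linarith
  define u where "u s = F s (\<gamma> s) - exp (-s) * c" for s
  have u_deriv: "(u has_real_derivative -(1 - P t (\<gamma> t)) * u t) (at t)" if "0 < t" for t
  proof -
    have "((\<lambda>s. exp (-s) * c) has_real_derivative - exp (-t) * c) (at t)"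
      by (auto intro!: derivative_eq_intros)
    from DERIV_diff[OF has_real_derivative_bernstein_characteristic[OF \<open>0 < \<xi>\<close> that] this]
    have "(u has_real_derivative
        -(1 - P t (\<gamma> t)) * F t (\<gamma> t) + P t (\<gamma> t) * (- exp (-t) * c) - (- exp (-t) * c)) (at t)"
      unfolding u_def[abs_def] \<gamma>_def c_def .
    then show ?thesis
      by (simp add: u_def algebra_simps)
  qed
  have "(\<xi> + c)-lipschitz_on {0..T} (\<lambda>s. F s (\<gamma> s))"
    using lipschitz_on_bernstein_characteristic[OF \<open>0 < \<xi>\<close>] unfolding \<gamma>_def c_def
    by (rule lipschitz_on_subset) auto
  then have cont: "continuous_on {0..T} (\<lambda>s. (u s)\<^sup>2)"
    unfolding u_def by (intro continuous_intros lipschitz_on_continuous_on)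
  \<comment> \<open>u' = - (1 - P) u with P \<le> 1, so the square of u cannot grow from u 0 = 0.\<close>
  have mono: "\<exists>y. ((\<lambda>s. (u s)\<^sup>2) has_real_derivative y) (at t) \<and> y \<le> 0" if "0 < t" "t < T" for t
  proof -
    have "P t (\<gamma> t) \<le> 1"
      using laplace_mass_bounds[of t "\<gamma> t"] \<gamma>_nonneg that by simp
    then have "0 \<le> (1 - P t (\<gamma> t)) * (u t)\<^sup>2"
      by simp
    moreover have "((\<lambda>s. (u s)\<^sup>2) has_real_derivative -(2 * ((1 - P t (\<gamma> t)) * (u t)\<^sup>2))) (at t)"
      using DERIV_power[OF u_deriv[OF \<open>0 < t\<close>], of 2] by (simp add: power2_eq_square algebra_simps)
    ultimately show ?thesis
      by auto
  qed
  have "(u T)\<^sup>2 \<le> (u 0)\<^sup>2"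
    by (rule DERIV_nonpos_imp_decreasing_open[OF \<open>0 \<le> T\<close> mono cont])
  moreover have "u 0 = 0"
    by (simp add: u_def \<gamma>_def c_def characteristic_def)
  ultimately show ?thesis
    by (simp add: u_def \<gamma>_def c_def)
qed

lemma characteristic_foot:
  assumes "0 \<le> t" "0 < \<eta>"
  obtains b where "\<eta> \<le> b" "b \<le> \<eta> * exp t" "characteristic b (F 0 b) t = \<eta>"
proof -
  have "continuous_on {\<eta>..\<eta> * exp t} (F 0)"
    by (rule continuous_on_subset[OF lipschitz_on_continuous_on[OF lipschitz_on_bernstein[OF order_refl]]])
      (use \<open>0 < \<eta>\<close> in \<open>simp add: subset_eq\<close>)
  then have "continuous_on {\<eta>..\<eta> * exp t} (\<lambda>\<xi>. characteristic \<xi> (F 0 \<xi>) t)"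
    unfolding characteristic_def by (intro continuous_intros)
  moreover have "characteristic \<eta> (F 0 \<eta>) t \<le> \<eta>"
    using characteristic_bounds(2) bernstein_bounds[of 0 \<eta>] assms by simp
  moreover have "\<eta> \<le> characteristic (\<eta> * exp t) (F 0 (\<eta> * exp t)) t"
    using characteristic_bounds(1)[of "F 0 (\<eta> * exp t)" "\<eta> * exp t" t] bernstein_bounds[of 0 "\<eta> * exp t"] assms
    by (simp add: mult.assoc flip: exp_add)
  moreover have "\<eta> \<le> \<eta> * exp t"
    using assms by simp
  ultimately show thesis
    using IVT'[of "\<lambda>\<xi>. characteristic \<xi> (F 0 \<xi>) t" \<eta> \<eta> "\<eta> * exp t"] that by blast
qed

end


section \<open>Contraction of the rescaled solutions\<close>

lemma abs_sub_mult_ge: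
  fixes c d q :: real
  assumes "0 \<le> q * d" "\<bar>q\<bar> \<le> \<bar>d\<bar>" "0 \<le> c" "c \<le> 1"
  shows "(1 - c) * \<bar>d\<bar> \<le> \<bar>d - c * q\<bar>"
proof (cases "0 \<le> d")
  case True
  then have "0 \<le> q" "q \<le> d"
    using assms by (auto simp: zero_le_mult_iff)
  then have "c * q \<le> c * d" "0 \<le> c * q"
    using assms by (auto intro: mult_left_mono)
  then show ?thesis
    using True by (simp add: algebra_simps)
next
  case False
  then have "q \<le> 0" "d \<le> q"
    using assms by (auto simp: zero_le_mult_iff)
  then have "c * d \<le> c * q" "c * q \<le> 0"
    using assms by (auto intro: mult_left_mono simp: mult_nonneg_nonpos)
  then show ?thesis
    using False by (simp add: algebra_simps)
qed

text \<open>Both solutions are traced back along their characteristics to feet a and b; since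
  bernstein n1 0 is monotone and 1-Lipschitz, the distance of the feet is controlled by the
  initial difference at b.\<close>
lemma bernstein_contraction:
  assumes "add_coag_solution n1" "add_coag_solution n2" "0 \<le> t" "0 < \<eta>"
  obtains b where "\<eta> \<le> b" "b \<le> \<eta> * exp t"
    "\<bar>bernstein n1 t \<eta> - bernstein n2 t \<eta>\<bar> \<le> \<bar>bernstein n1 0 b - bernstein n2 0 b\<bar>"
proof (cases "t = 0")
  case True
  then show thesis
    using that[of \<eta>] by simp
next
  case False
  interpret A: add_coag_solution n1 by fact
  interpret B: add_coag_solution n2 by fact
  define c where "c = 1 - exp (-t)"
  have c: "0 < c" "c < 1"
    using False \<open>0 \<le> t\<close> by (auto simp: c_def)
  obtain a where a: "\<eta> \<le> a" "a \<le> \<eta> * exp t" "characteristic a (A.F 0 a) t = \<eta>"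
    using A.characteristic_foot[OF \<open>0 \<le> t\<close> \<open>0 < \<eta>\<close>] by blast
  obtain b where b: "\<eta> \<le> b" "b \<le> \<eta> * exp t" "characteristic b (B.F 0 b) t = \<eta>"
    using B.characteristic_foot[OF \<open>0 \<le> t\<close> \<open>0 < \<eta>\<close>] by blast
  have "A.F t \<eta> - B.F t \<eta> = exp (-t) * (A.F 0 a - B.F 0 b)"
    using A.bernstein_along_characteristic[of a t] B.bernstein_along_characteristic[of b t] a b assms
    by (simp add: algebra_simps)
  define d where "d = a - b"
  define q where "q = A.F 0 a - A.F 0 b"
  have "\<bar>q\<bar> \<le> \<bar>d\<bar>"
    unfolding q_def d_def using a b assms by (intro A.bernstein_lipschitz) auto
  moreover have "0 \<le> q * d"
    using A.bernstein_mono[of 0 a b] A.bernstein_mono[of 0 b a] a b assms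
    by (cases "b \<le> a") (auto simp: q_def d_def mult_nonpos_nonpos)
  ultimately have "(1 - c) * \<bar>d\<bar> \<le> \<bar>d - c * q\<bar>"
    using c by (intro abs_sub_mult_ge) auto
  have feet: "d = c * (A.F 0 a - B.F 0 b)" "d - c * q = c * (A.F 0 b - B.F 0 b)"
    using a(3) b(3) by (simp_all add: characteristic_def c_def d_def q_def algebra_simps)
  have "c * \<bar>A.F t \<eta> - B.F t \<eta>\<bar> = exp (-t) * \<bar>d\<bar>"
    using \<open>A.F t \<eta> - B.F t \<eta> = exp (-t) * (A.F 0 a - B.F 0 b)\<close> feet(1) c by (simp add: abs_mult)
  also have "\<dots> = (1 - c) * \<bar>d\<bar>"
    by (simp add: c_def)
  also have "\<dots> \<le> c * \<bar>A.F 0 b - B.F 0 b\<bar>"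
    using \<open>(1 - c) * \<bar>d\<bar> \<le> \<bar>d - c * q\<bar>\<close> feet(2) c by (simp add: abs_mult)
  finally show thesis
    using that[of b] b c by simp
qed

lemma set_integral_rescale_diff:
  assumes "add_coag_solution n1" "add_coag_solution n2" "0 \<le> \<tau>" "0 < \<eta>"
  shows "(LINT z:{0<..}|lborel. (1 - exp (-(\<eta> * z))) * (rescale n1 \<tau> z - rescale n2 \<tau> z))
       = exp \<tau> * (bernstein n1 (\<tau>/2) (\<eta> * exp (-\<tau>)) - bernstein n2 (\<tau>/2) (\<eta> * exp (-\<tau>)))"
proof -
  interpret A: add_coag_solution n1 by fact
  interpret B: add_coag_solution n2 by fact
  define \<xi> where "\<xi> = \<eta> * exp (-\<tau>)"
  have "0 \<le> \<xi>" "0 \<le> \<tau> / 2"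
    using assms by (auto simp: \<xi>_def)
  define g where "g x = exp (2 * \<tau>) * ((1 - exp (-(\<xi> * x))) * A.N (\<tau>/2) x - (1 - exp (-(\<xi> * x))) * B.N (\<tau>/2) x)"
    for x
  have scale: "\<xi> * (exp \<tau> * z) = \<eta> * z" for z
    by (simp add: \<xi>_def mult_ac flip: exp_add)
  have ind: "indicator {0<..} (exp \<tau> * z) = (indicator {0<..} z :: real)" for z
    by (simp add: indicator_def zero_less_mult_iff)
  have "indicator {0<..} z *\<^sub>R ((1 - exp (-(\<eta> * z))) * (rescale n1 \<tau> z - rescale n2 \<tau> z))
      = g (0 + exp \<tau> * z)" for z
  proof -
    have "g (0 + exp \<tau> * z) = exp (2 * \<tau>) * ((1 - exp (-(\<eta> * z))) * (indicator {0<..} z * n1 (\<tau>/2) (exp \<tau> * z))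
        - (1 - exp (-(\<eta> * z))) * (indicator {0<..} z * n2 (\<tau>/2) (exp \<tau> * z)))"
      unfolding g_def pos_density_def add_0_left scale ind ..
    then show ?thesis
      by (simp add: rescale_def algebra_simps)
  qed
  then have "(LINT z:{0<..}|lborel. (1 - exp (-(\<eta> * z))) * (rescale n1 \<tau> z - rescale n2 \<tau> z))
      = (\<integral>z. g (0 + exp \<tau> * z) \<partial>lborel)"
    unfolding set_lebesgue_integral_def by simp
  also have "\<dots> = exp (-\<tau>) * (\<integral>x. g x \<partial>lborel)"
    using lborel_integral_real_affine[of "exp \<tau>" g 0] by (simp add: field_simps exp_minus)
  also have "(\<integral>x. g x \<partial>lborel) = exp (2 * \<tau>) * (A.F (\<tau>/2) \<xi> - B.F (\<tau>/2) \<xi>)"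
    unfolding g_def bernstein_def
    using Bochner_Integration.integral_diff[OF A.integrable_bernstein_kernel B.integrable_bernstein_kernel,
        OF \<open>0 \<le> \<tau> / 2\<close> \<open>0 \<le> \<xi>\<close> \<open>0 \<le> \<tau> / 2\<close> \<open>0 \<le> \<xi>\<close>]
    by simp
  finally show ?thesis
    by (simp add: \<xi>_def mult.assoc flip: exp_add)
qed

lemma rescaled_transform_contraction:
  assumes "add_coag_solution n1" "add_coag_solution n2" "0 \<le> \<kappa>" "0 \<le> \<tau>" "0 < \<eta>"
  shows "\<exists>b>0. \<eta> powr -\<kappa> * \<bar>LINT z:{0<..}|lborel. (1 - exp (-(\<eta> * z))) * (rescale n1 \<tau> z - rescale n2 \<tau> z)\<bar>
    \<le> exp (-(1/2) * (\<kappa> - 2) * \<tau>) *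
      (b powr -\<kappa> * \<bar>LINT z:{0<..}|lborel. (1 - exp (-(b * z))) * (rescale n1 0 z - rescale n2 0 z)\<bar>)"
proof -
  define \<xi> where "\<xi> = \<eta> * exp (-\<tau>)"
  have "0 < \<xi>" "0 \<le> \<tau> / 2"
    using assms by (auto simp: \<xi>_def)
  obtain b where b: "\<xi> \<le> b" "b \<le> \<xi> * exp (\<tau> / 2)"
    and contr: "\<bar>bernstein n1 (\<tau>/2) \<xi> - bernstein n2 (\<tau>/2) \<xi>\<bar> \<le> \<bar>bernstein n1 0 b - bernstein n2 0 b\<bar>"
    using bernstein_contraction[OF assms(1,2) \<open>0 \<le> \<tau> / 2\<close> \<open>0 < \<xi>\<close>] by blast
  have "0 < b"
    using b \<open>0 < \<xi>\<close> by simp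
  have "b powr \<kappa> \<le> (\<eta> * exp (-(\<tau> / 2))) powr \<kappa>"
    using b \<open>0 < b\<close> assms by (intro powr_mono2) (auto simp: \<xi>_def mult.assoc simp flip: exp_add)
  also have "\<dots> = \<eta> powr \<kappa> * exp (-(\<tau> / 2) * \<kappa>)"
    by (simp add: powr_mult exp_powr_real)
  finally have "\<eta> powr -\<kappa> * exp \<tau> * b powr \<kappa> \<le> \<eta> powr -\<kappa> * exp \<tau> * (\<eta> powr \<kappa> * exp (-(\<tau> / 2) * \<kappa>))"
    by (rule mult_left_mono) simp
  also have "\<dots> = exp (-(1/2) * (\<kappa> - 2) * \<tau>)"
    using \<open>0 < \<eta>\<close> by (simp add: powr_minus field_simps flip: exp_add)
  finally have factor: "\<eta> powr -\<kappa> * exp \<tau> * b powr \<kappa> \<le> exp (-(1/2) * (\<kappa> - 2) * \<tau>)" .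
  have "\<eta> powr -\<kappa> * \<bar>LINT z:{0<..}|lborel. (1 - exp (-(\<eta> * z))) * (rescale n1 \<tau> z - rescale n2 \<tau> z)\<bar>
      = \<eta> powr -\<kappa> * exp \<tau> * \<bar>bernstein n1 (\<tau>/2) \<xi> - bernstein n2 (\<tau>/2) \<xi>\<bar>"
    using set_integral_rescale_diff[OF assms(1,2,4,5)] by (simp add: \<xi>_def abs_mult)
  also have "\<dots> \<le> \<eta> powr -\<kappa> * exp \<tau> * \<bar>bernstein n1 0 b - bernstein n2 0 b\<bar>"
    using contr by (intro mult_left_mono) auto
  also have "\<dots> = (\<eta> powr -\<kappa> * exp \<tau> * b powr \<kappa>) * (b powr -\<kappa> * \<bar>bernstein n1 0 b - bernstein n2 0 b\<bar>)"
    using \<open>0 < b\<close> by (simp add: powr_minus field_simps)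
  also have "\<dots> \<le> exp (-(1/2) * (\<kappa> - 2) * \<tau>) * (b powr -\<kappa> * \<bar>bernstein n1 0 b - bernstein n2 0 b\<bar>)"
    using factor by (intro mult_right_mono) auto
  also have "bernstein n1 0 b - bernstein n2 0 b
      = (LINT z:{0<..}|lborel. (1 - exp (-(b * z))) * (rescale n1 0 z - rescale n2 0 z))"
    using set_integral_rescale_diff[OF assms(1,2) order_refl \<open>0 < b\<close>] by simp
  finally show ?thesis
    using \<open>0 < b\<close> by blast
qed

lemma add_norm_le_mult:
  assumes "0 \<le> c"
    and pointwise: "\<And>\<eta>. 0 < \<eta> \<Longrightarrow> \<exists>b>0.
      \<eta> powr -\<kappa> * \<bar>LINT x:{0<..}|lborel. (1 - exp (-(\<eta> * x))) * g x\<bar>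
        \<le> c * (b powr -\<kappa> * \<bar>LINT x:{0<..}|lborel. (1 - exp (-(b * x))) * h x\<bar>)"
  shows "add_norm \<kappa> g \<le> ereal c * add_norm \<kappa> h"
  unfolding add_norm_def[of \<kappa> g]
proof (rule SUP_least)
  fix \<eta> :: real assume "\<eta> \<in> {0<..}"
  then obtain b where "0 < b" and le: "\<eta> powr -\<kappa> * \<bar>LINT x:{0<..}|lborel. (1 - exp (-(\<eta> * x))) * g x\<bar>
      \<le> c * (b powr -\<kappa> * \<bar>LINT x:{0<..}|lborel. (1 - exp (-(b * x))) * h x\<bar>)"
    using pointwise by force
  have "ereal (b powr -\<kappa> * \<bar>LINT x:{0<..}|lborel. (1 - exp (-(b * x))) * h x\<bar>) \<le> add_norm \<kappa> h"
    unfolding add_norm_def using \<open>0 < b\<close> by (intro SUP_upper) simp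
  then have "ereal c * ereal (b powr -\<kappa> * \<bar>LINT x:{0<..}|lborel. (1 - exp (-(b * x))) * h x\<bar>)
      \<le> ereal c * add_norm \<kappa> h"
    using \<open>0 \<le> c\<close> by (intro ereal_mult_left_mono) auto
  moreover have "ereal (\<eta> powr -\<kappa> * \<bar>LINT x:{0<..}|lborel. (1 - exp (-(\<eta> * x))) * g x\<bar>)
      \<le> ereal c * ereal (b powr -\<kappa> * \<bar>LINT x:{0<..}|lborel. (1 - exp (-(b * x))) * h x\<bar>)"
    using le by simp
  ultimately show "ereal (\<eta> powr -\<kappa> * \<bar>LINT x:{0<..}|lborel. (1 - exp (-(\<eta> * x))) * g x\<bar>)
      \<le> ereal c * add_norm \<kappa> h"
    by (rule order_trans[rotated])
qed

theorem theorem1p3: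
  fixes n1 n2 :: "real \<Rightarrow> real \<Rightarrow> real" and \<kappa> \<tau> :: real
  assumes sol1: "smol_solution (\<lambda>x y. x + y) n1" and mc1: "mass_conserving n1"
    and sol2: "smol_solution (\<lambda>x y. x + y) n2" and mc2: "mass_conserving n2"
    and L1_1: "set_integrable lborel {0<..} (n1 0)"
    and L1_2: "set_integrable lborel {0<..} (n2 0)"
    and m1_1: "set_integrable lborel {0<..} (\<lambda>x. x * n1 0 x)"
    and m1_1': "(LINT x:{0<..}|lborel. x * n1 0 x) = 1"
    and m2_1: "set_integrable lborel {0<..} (\<lambda>x. x^2 * n1 0 x)"
    and m2_1': "(LINT x:{0<..}|lborel. x^2 * n1 0 x) = 1"
    and m3_1: "set_integrable lborel {0<..} (\<lambda>x. x^3 * n1 0 x)"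
    and m1_2: "set_integrable lborel {0<..} (\<lambda>x. x * n2 0 x)"
    and m1_2': "(LINT x:{0<..}|lborel. x * n2 0 x) = 1"
    and m2_2: "set_integrable lborel {0<..} (\<lambda>x. x^2 * n2 0 x)"
    and m2_2': "(LINT x:{0<..}|lborel. x^2 * n2 0 x) = 1"
    and m3_2: "set_integrable lborel {0<..} (\<lambda>x. x^3 * n2 0 x)"
    and \<kappa>: "2 < \<kappa>" "\<kappa> < 3"
    and \<tau>: "0 \<le> \<tau>"
  shows "add_norm \<kappa> (\<lambda>z. rescale n1 \<tau> z - rescale n2 \<tau> z)
           \<le> ereal (exp (-(1/2) * (\<kappa> - 2) * \<tau>)) *
              add_norm \<kappa> (\<lambda>z. rescale n1 0 z - rescale n2 0 z)"
proof -
  have sols: "add_coag_solution n1" "add_coag_solution n2"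
    using sol1 mc1 m1_1' sol2 mc2 m1_2' by (simp_all add: add_coag_solution_def)
  have "0 \<le> \<kappa>"
    using \<kappa> by simp
  show ?thesis
  proof (rule add_norm_le_mult)
    fix \<eta> :: real assume "0 < \<eta>"
    then show "\<exists>b>0. \<eta> powr -\<kappa> * \<bar>LINT x:{0<..}|lborel. (1 - exp (-(\<eta> * x))) * (rescale n1 \<tau> x - rescale n2 \<tau> x)\<bar>
        \<le> exp (-(1/2) * (\<kappa> - 2) * \<tau>) *
          (b powr -\<kappa> * \<bar>LINT x:{0<..}|lborel. (1 - exp (-(b * x))) * (rescale n1 0 x - rescale n2 0 x)\<bar>)"
      by (rule rescaled_transform_contraction[OF sols \<open>0 \<le> \<kappa>\<close> \<tau>])
  qed simp
qed

end
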